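(* Let $n\ge1$ and let $A_1,B_1,A_2,B_2$ be smooth $\mathbb{R}_{0,m}$-valued functions depending only on $\underline{y}$. The function $$F(X)=(\cos z)A_1(\underline{y})+(\sin z)B_1(\underline{y})+(\cos\overline{z})A_2(\underline{y})+(\sin\overline{z})B_2(\underline{y})$$ is left $n$-monogenic (i.e. $\partial_X^nF=0$) if and only if $\Delta^nA_1=0$, $\Delta^nB_1=0$, $$A_2=\sum_{k=1}^n(-1)^kc_k\,\partial_{\underline{y}}^{2k-1}B_1,\qquad B_2=\sum_{k=1}^n(-1)^{k+1}c_k\,\partial_{\underline{y}}^{2k-1}A_1,$$ where $c_1=-\frac12$ and $c_k=-\frac{1}{2^k}\sum_{j=1}^{\lfloor k/2\rfloor}\sum_{i=1}^{j}\binom{k+1}{2j+1}\binom{j}{i}c_{k-i}$ for $k\ge2$.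
   Context: Let $m\ge 2$ and let $\mathbb{R}_{0,m}$ be the real Clifford algebra generated by $e_1,\dots,e_m$ with $e_i^2=-1$ and $e_ie_j=-e_je_i$ for $i\neq j$; all products are Clifford products. Identify $(x_0,\dots,x_m)\in\mathbb{R}^{m+1}$ with $X=x_0+\sum_{j=1}^m x_je_j$, and write $z=x_0+x_1e_1$, $\overline{z}=x_0-x_1e_1$, $\underline{y}=\sum_{j=2}^m x_je_j$. The subalgebra spanned by $1,e_1$ is identified with $\mathbb{C}$ via $i\mapsto e_1$; $\cos,\sin$ are the complex cosine and sine under this identification. Operators: $\partial_X f=\partial_{x_0}f+\sum_{j=1}^m e_j\partial_{x_j}f$, $\partial_{\underline{y}}f=\sum_{j=2}^m e_j\partial_{x_j}f$; powers denote iterated left application. $\Delta=\sum_{j=2}^m\partial_{x_j}^2=-\partial_{\underline{y}}^2$. *)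

theory Defs
  imports "HOL-Analysis.Analysis"
begin

text \<open>An element of the Clifford algebra is represented by its coefficients on the
basis blades e_B = e_{b1} ... e_{bk} (b1 < ... < bk), B a set of indices.\<close>

type_synonym clif = "nat set \<Rightarrow> real"

definition clif_in :: "nat \<Rightarrow> clif \<Rightarrow> bool" where
  "clif_in m u \<longleftrightarrow> (\<forall>B. \<not> B \<subseteq> {1..m} \<longrightarrow> u B = 0)"

text \<open>Sign of e_A e_B = blade_sign A B * e_(A symmetric-difference B), using e_i^2 = -1 and
anticommutation of distinct generators.\<close>

definition blade_sign :: "nat set \<Rightarrow> nat set \<Rightarrow> real" where
  "blade_sign A B = (-1) ^ (card {(a, b). a \<in> A \<and> b \<in> B \<and> b < a} + card (A \<inter> B))"

definition cmul :: "nat \<Rightarrow> clif \<Rightarrow> clif \<Rightarrow> clif" where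
  "cmul m u v = (\<lambda>C. \<Sum>A\<in>Pow {1..m}. \<Sum>B\<in>Pow {1..m}.
      (if (A - B) \<union> (B - A) = C then blade_sign A B * u A * v B else 0))"

definition cadd :: "clif \<Rightarrow> clif \<Rightarrow> clif" where
  "cadd u v = (\<lambda>C. u C + v C)"

definition cscale :: "real \<Rightarrow> clif \<Rightarrow> clif" where
  "cscale r u = (\<lambda>C. r * u C)"

definition czero :: clif where
  "czero = (\<lambda>C. 0)"

definition egen :: "nat \<Rightarrow> clif" where
  "egen j = (\<lambda>C. if C = {j} then 1 else 0)"

text \<open>Embedding of C = span{1, e_1}, with i identified with e_1.\<close>
definition cplx :: "complex \<Rightarrow> clif" where
  "cplx c = (\<lambda>C. if C = {} then Re c else if C = {1} then Im c else 0)"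

text \<open>Points X = (x_0,...,x_m) of R^{m+1} are represented as x :: nat => real
(coordinates with index > m are irrelevant).\<close>

definition pd :: "nat \<Rightarrow> ((nat \<Rightarrow> real) \<Rightarrow> clif) \<Rightarrow> (nat \<Rightarrow> real) \<Rightarrow> clif" where
  "pd j f x = (\<lambda>C. deriv (\<lambda>t. f (x(j := t)) C) (x j))"

definition rpd :: "nat \<Rightarrow> ((nat \<Rightarrow> real) \<Rightarrow> real) \<Rightarrow> (nat \<Rightarrow> real) \<Rightarrow> real" where
  "rpd j g x = deriv (\<lambda>t. g (x(j := t))) (x j)"

fun rpds :: "nat list \<Rightarrow> ((nat \<Rightarrow> real) \<Rightarrow> real) \<Rightarrow> (nat \<Rightarrow> real) \<Rightarrow> real" where
  "rpds [] g = g"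
| "rpds (j # js) g = rpd j (rpds js g)"

definition cont_coords :: "nat set \<Rightarrow> ((nat \<Rightarrow> real) \<Rightarrow> real) \<Rightarrow> bool" where
  "cont_coords S g \<longleftrightarrow> (\<forall>x \<epsilon>. \<epsilon> > 0 \<longrightarrow> (\<exists>\<delta>>0. \<forall>x'.
      (\<forall>j\<in>S. \<bar>x' j - x j\<bar> < \<delta>) \<and> (\<forall>j. j \<notin> S \<longrightarrow> x' j = x j) \<longrightarrow> \<bar>g x' - g x\<bar> < \<epsilon>))"

definition smooth_coords :: "nat set \<Rightarrow> ((nat \<Rightarrow> real) \<Rightarrow> real) \<Rightarrow> bool" where
  "smooth_coords S g \<longleftrightarrow> (\<forall>js. set js \<subseteq> S \<longrightarrow>
      cont_coords S (rpds js g) \<and>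
      (\<forall>j\<in>S. \<forall>x. (\<lambda>t. rpds js g (x(j := t))) differentiable (at (x j))))"

definition smooth_clif :: "nat set \<Rightarrow> ((nat \<Rightarrow> real) \<Rightarrow> clif) \<Rightarrow> bool" where
  "smooth_clif S f \<longleftrightarrow> (\<forall>C. smooth_coords S (\<lambda>x. f x C))"

definition depends_only :: "nat set \<Rightarrow> ((nat \<Rightarrow> real) \<Rightarrow> 'b) \<Rightarrow> bool" where
  "depends_only S f \<longleftrightarrow> (\<forall>x x'. (\<forall>j\<in>S. x j = x' j) \<longrightarrow> f x = f x')"

definition dirX :: "nat \<Rightarrow> ((nat \<Rightarrow> real) \<Rightarrow> clif) \<Rightarrow> (nat \<Rightarrow> real) \<Rightarrow> clif" where
  "dirX m f x = (\<lambda>C. pd 0 f x C + (\<Sum>j\<in>{1..m}. cmul m (egen j) (pd j f x) C))"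

definition dirY :: "nat \<Rightarrow> ((nat \<Rightarrow> real) \<Rightarrow> clif) \<Rightarrow> (nat \<Rightarrow> real) \<Rightarrow> clif" where
  "dirY m f x = (\<lambda>C. \<Sum>j\<in>{2..m}. cmul m (egen j) (pd j f x) C)"

definition lapY :: "nat \<Rightarrow> ((nat \<Rightarrow> real) \<Rightarrow> clif) \<Rightarrow> (nat \<Rightarrow> real) \<Rightarrow> clif" where
  "lapY m f x = (\<lambda>C. \<Sum>j\<in>{2..m}. pd j (pd j f) x C)"

function ccoef :: "nat \<Rightarrow> real" where
  "ccoef k = (if k = 0 then 0 else if k = 1 then - 1 / 2 else
     - (1 / 2 ^ k) * (\<Sum>j\<in>{1..k div 2}. \<Sum>i\<in>{1..j}.
        real ((k + 1) choose (2 * j + 1)) * real (j choose i) * ccoef (k - i)))"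
  by auto
termination
  by (relation "Wellfounded.measure id") auto

definition Ffun :: "nat \<Rightarrow> ((nat \<Rightarrow> real) \<Rightarrow> clif) \<Rightarrow> ((nat \<Rightarrow> real) \<Rightarrow> clif) \<Rightarrow>
    ((nat \<Rightarrow> real) \<Rightarrow> clif) \<Rightarrow> ((nat \<Rightarrow> real) \<Rightarrow> clif) \<Rightarrow> (nat \<Rightarrow> real) \<Rightarrow> clif" where
  "Ffun m A1 B1 A2 B2 x =
     (let z = Complex (x 0) (x 1); zb = Complex (x 0) (- x 1) in
      cadd (cadd (cmul m (cplx (cos z)) (A1 x)) (cmul m (cplx (sin z)) (B1 x)))
           (cadd (cmul m (cplx (cos zb)) (A2 x)) (cmul m (cplx (sin zb)) (B2 x))))"

end

(*
  Write D for the Dirac operator in y and F(a, b, c, d) for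
  cos z a + sin z b + cos zbar c + sin zbar d.  The generator e_1 commutes with cos z and sin z,
  while e_2, ..., e_m turn them into cos zbar and sin zbar; hence the Dirac operator in X acts on
  the coefficients: dirX F(a, b, c, d) = F(T(a, b, c, d)) with
  T(a, b, c, d) = (D c, D d, D a + 2 d, D b - 2 c).  As cos z, sin z, cos zbar, sin zbar are
  independent over functions of y, dirX^n F = 0 means T^n (a, b, c, d) = 0; moreover Delta = - D^2.

  Now T^n (a, b, c, d) = 0 iff D^2n a = D^2n b = 0, c = P b and d = - P a, where P is
  D^-1 (1 - sqrt (1 - D^2)) truncated at order 2n - 1.  Nilpotency is forced because T' T = D^2
  for T'(a, b, c, d) = (D c - 2 b, D d + 2 a, D a, D b).  The identity D P^2 - 2 P + D = 0 makes
  T map (a, b, P b, - P a) to a quadruple of the same shape whose nilpotency order is two less,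
  and T^n (0, 0, g, h) = 0 forces g = h = 0, which gives uniqueness.

  The numbers (-1)^k c_k are the Taylor coefficients of 1 - sqrt (1 - X): the recursion defining
  c_k is the vanishing of the coefficient of X^k in (1 - sqrt (1 - X))^(k+1), expanded binomially
  using sqrt (1 - X)^2 = 1 - X.
*)

theory Submission
  imports Defs "HOL-Computational_Algebra.Formal_Power_Series" "HOL-Library.Function_Algebras"
begin

section \<open>Taylor coefficients of 1 - sqrt (1 - X)\<close>

fun sqrt_coeff :: "nat \<Rightarrow> real" where
  "sqrt_coeff r = (if r = 0 then 0 else if r = 1 then 1 / 2 else
     (1 / 2) * (\<Sum>k\<in>{1..r-1}. sqrt_coeff k * sqrt_coeff (r - k)))"

declare sqrt_coeff.simps[simp del]

lemma sqrt_coeff_0 [simp]: "sqrt_coeff 0 = 0"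
  and sqrt_coeff_1 [simp]: "sqrt_coeff (Suc 0) = 1 / 2"
  by (simp_all add: sqrt_coeff.simps)

lemma sqrt_coeff_rec: "r \<ge> 2 \<Longrightarrow> 2 * sqrt_coeff r = (\<Sum>k\<in>{1..r-1}. sqrt_coeff k * sqrt_coeff (r - k))"
  by (subst sqrt_coeff.simps) simp

definition one_minus_sqrt :: "real fps" where
  "one_minus_sqrt = Abs_fps sqrt_coeff"

lemma one_minus_sqrt_square: "one_minus_sqrt * one_minus_sqrt = 2 * one_minus_sqrt - fps_X"
proof (rule fps_ext)
  fix n
  show "fps_nth (one_minus_sqrt * one_minus_sqrt) n = fps_nth (2 * one_minus_sqrt - fps_X) n"
  proof (cases "n \<ge> 2")
    case True
    have "{0..n} = insert 0 (insert n {1..n-1})" using True by auto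
    then have "fps_nth (one_minus_sqrt * one_minus_sqrt) n =
        (\<Sum>k\<in>{1..n-1}. sqrt_coeff k * sqrt_coeff (n - k))"
      using True by (simp add: fps_mult_nth one_minus_sqrt_def)
    then show ?thesis using True sqrt_coeff_rec[OF True] by (simp add: one_minus_sqrt_def fps_X_def)
  next
    case False
    then have "n = 0 \<or> n = 1" by auto
    then show ?thesis by (auto simp: fps_mult_nth one_minus_sqrt_def fps_X_def)
  qed
qed

lemma one_minus_sqrt_power_nth: "k < n \<Longrightarrow> fps_nth (one_minus_sqrt ^ n) k = 0"
proof -
  assume "k < n"
  have eq: "one_minus_sqrt = fps_X * Abs_fps (\<lambda>k. sqrt_coeff (Suc k))"
    by (rule fps_ext) (simp add: one_minus_sqrt_def fps_X_mult_nth)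
  show ?thesis
    unfolding eq power_mult_distrib using \<open>k < n\<close> by (simp add: fps_X_power_mult_nth)
qed

definition binomial_even_part :: "nat \<Rightarrow> 'a::comm_ring_1 \<Rightarrow> 'a" where
  "binomial_even_part n t = (\<Sum>j\<le>n. of_nat (n choose (2 * j)) * t ^ j)"

definition binomial_odd_part :: "nat \<Rightarrow> 'a::comm_ring_1 \<Rightarrow> 'a" where
  "binomial_odd_part n t = (\<Sum>j\<le>n. of_nat (n choose (2 * j + 1)) * t ^ j)"

lemma binomial_odd_part_Suc:
  "binomial_odd_part (Suc n) t = binomial_odd_part n t + binomial_even_part n t"
proof -
  have "binomial_odd_part (Suc n) t =
      (\<Sum>j\<le>Suc n. of_nat (n choose (2 * j)) * t ^ j) + (\<Sum>j\<le>Suc n. of_nat (n choose (2 * j + 1)) * t ^ j)"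
    unfolding binomial_odd_part_def by (simp add: sum.distrib algebra_simps)
  then show ?thesis
    by (simp add: binomial_odd_part_def binomial_even_part_def binomial_eq_0)
qed

lemma binomial_even_part_Suc:
  "binomial_even_part (Suc n) t = binomial_even_part n t + t * binomial_odd_part n t"
proof -
  have "binomial_even_part (Suc n) t =
      1 + (\<Sum>j\<le>n. of_nat (n choose (2 * Suc j)) * t ^ Suc j + of_nat (n choose (2 * j + 1)) * t ^ Suc j)"
    unfolding binomial_even_part_def by (subst sum.atMost_Suc_shift) (simp add: algebra_simps)
  also have "\<dots> = (1 + (\<Sum>j\<le>n. of_nat (n choose (2 * Suc j)) * t ^ Suc j)) + t * binomial_odd_part n t"
    by (simp add: binomial_odd_part_def sum.distrib sum_distrib_left algebra_simps)
  also have "1 + (\<Sum>j\<le>n. of_nat (n choose (2 * Suc j)) * t ^ Suc j) =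
      (\<Sum>j\<le>Suc n. of_nat (n choose (2 * j)) * t ^ j)"
    by (subst sum.atMost_Suc_shift) simp
  also have "\<dots> = binomial_even_part n t"
    by (simp add: binomial_even_part_def binomial_eq_0)
  finally show ?thesis .
qed

lemma power_one_plus_sqrt:
  assumes "s * s = t"
  shows "(1 + s) ^ n = binomial_even_part n t + s * binomial_odd_part n t"
proof (induction n)
  case 0
  then show ?case by (simp add: binomial_even_part_def binomial_odd_part_def)
next
  case (Suc n)
  then show ?case
    by (simp add: binomial_even_part_Suc binomial_odd_part_Suc algebra_simps flip: assms)
qed

lemma power_one_minus_sqrt:
  assumes "s * s = t"
  shows "(1 - s) ^ n = binomial_even_part n t - s * binomial_odd_part n t"
  using power_one_plus_sqrt[of "- s" t n] assms by simp

lemma binomial_odd_part_one: "n \<ge> 1 \<Longrightarrow> binomial_odd_part n (1 :: real) = 2 ^ (n - 1)"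
  using power_one_plus_sqrt[of "1 :: real" 1 n] power_one_minus_sqrt[of "1 :: real" 1 n]
  by (cases n) simp_all

lemma one_minus_X_power_nth: "fps_nth ((1 - fps_X :: real fps) ^ j) i = (-1) ^ i * of_nat (j choose i)"
proof (induction j arbitrary: i)
  case 0
  then show ?case by (cases i) auto
next
  case (Suc j)
  then show ?case by (cases i) (simp_all add: algebra_simps fps_nth_power_0)
qed

lemma binomial_odd_part_nth:
  "fps_nth (binomial_odd_part n (1 - fps_X :: real fps)) i =
    (\<Sum>j\<le>n. of_nat (n choose (2 * j + 1)) * ((-1) ^ i * of_nat (j choose i)))"
  by (simp add: binomial_odd_part_def fps_sum_nth fps_of_nat[symmetric] one_minus_X_power_nth)

lemma binomial_even_part_nth:
  "fps_nth (binomial_even_part n (1 - fps_X :: real fps)) i =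
    (\<Sum>j\<le>n. of_nat (n choose (2 * j)) * ((-1) ^ i * of_nat (j choose i)))"
  by (simp add: binomial_even_part_def fps_sum_nth fps_of_nat[symmetric] one_minus_X_power_nth)

lemma binomial_parts_nth_eq_0:
  assumes "r \<ge> 2"
  shows "fps_nth (binomial_odd_part (Suc r) (1 - fps_X :: real fps)) r = 0"
    and "fps_nth (binomial_even_part (Suc r) (1 - fps_X :: real fps)) r = 0"
proof -
  have z: "Suc r choose (2 * j + e) = 0 \<or> j choose r = 0" for j e
  proof (cases "r \<le> j")
    case True
    then have "Suc r < 2 * j + e" using assms by linarith
    then show ?thesis by simp
  qed simp
  show "fps_nth (binomial_odd_part (Suc r) (1 - fps_X :: real fps)) r = 0"
    unfolding binomial_odd_part_nth
    by (intro sum.neutral ballI) (use z[of _ 1] in \<open>auto simp del: binomial_Suc_Suc\<close>)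
  show "fps_nth (binomial_even_part (Suc r) (1 - fps_X :: real fps)) r = 0"
    unfolding binomial_even_part_nth by (intro sum.neutral ballI) (use z[of _ 0] in auto)
qed

lemma binomial_odd_part_nth_0:
  "n \<ge> 1 \<Longrightarrow> fps_nth (binomial_odd_part n (1 - fps_X :: real fps)) 0 = 2 ^ (n - 1)"
  unfolding binomial_odd_part_nth using binomial_odd_part_one[of n] by (simp add: binomial_odd_part_def)

lemma binomial_odd_part_times_one_minus_sqrt_nth:
  assumes "r \<ge> 2"
  shows "fps_nth (binomial_odd_part (Suc r) (1 - fps_X) * one_minus_sqrt) r = 0"
proof -
  have "(1 - one_minus_sqrt) * (1 - one_minus_sqrt) = 1 - fps_X"
    using one_minus_sqrt_square by (simp add: algebra_simps)
  from power_one_minus_sqrt[OF this, of "Suc r"]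
  have "binomial_odd_part (Suc r) (1 - fps_X) * one_minus_sqrt =
      binomial_odd_part (Suc r) (1 - fps_X) - binomial_even_part (Suc r) (1 - fps_X) +
      one_minus_sqrt ^ Suc r"
    by (simp add: algebra_simps)
  then show ?thesis
    using binomial_parts_nth_eq_0[OF assms] one_minus_sqrt_power_nth[of r "Suc r"] by simp
qed

text \<open>This is the recursion defining the paper's c_r, with c_r = (-1)^r sqrt_coeff r.\<close>

lemma sqrt_coeff_binomial_rec:
  assumes r: "r \<ge> 2"
  shows "2 ^ r * sqrt_coeff r + (\<Sum>j\<in>{1..r div 2}. \<Sum>i\<in>{1..j}.
    real (Suc r choose (2 * j + 1)) * ((-1) ^ i * real (j choose i)) * sqrt_coeff (r - i)) = 0"
proof -
  define F where
    "F i j = real (Suc r choose (2 * j + 1)) * ((-1) ^ i * real (j choose i)) * sqrt_coeff (r - i)" for i j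
  have "0 = fps_nth (binomial_odd_part (Suc r) (1 - fps_X) * one_minus_sqrt) r"
    using binomial_odd_part_times_one_minus_sqrt_nth[OF r] by simp
  also have "\<dots> = (\<Sum>i=0..r. fps_nth (binomial_odd_part (Suc r) (1 - fps_X)) i * sqrt_coeff (r - i))"
    by (simp add: fps_mult_nth one_minus_sqrt_def)
  also have "\<dots> = fps_nth (binomial_odd_part (Suc r) (1 - fps_X)) 0 * sqrt_coeff r +
      (\<Sum>i=1..r. fps_nth (binomial_odd_part (Suc r) (1 - fps_X)) i * sqrt_coeff (r - i))"
    by (simp add: sum.atLeast_Suc_atMost)
  also have "\<dots> = 2 ^ r * sqrt_coeff r + (\<Sum>i=1..r. \<Sum>j\<le>Suc r. F i j)"
    using binomial_odd_part_nth_0[of "Suc r"]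
    by (simp only: binomial_odd_part_nth F_def sum_distrib_right) simp
  also have "(\<Sum>i=1..r. \<Sum>j\<le>Suc r. F i j) = (\<Sum>j\<le>Suc r. \<Sum>i=1..r. F i j)"
    by (rule sum.swap)
  also have "\<dots> = (\<Sum>j\<in>{1..r div 2}. \<Sum>i=1..r. F i j)"
  proof (rule sum.mono_neutral_right)
    show "\<forall>j\<in>{..Suc r} - {1..r div 2}. (\<Sum>i=1..r. F i j) = 0"
    proof (intro ballI)
      fix j assume j: "j \<in> {..Suc r} - {1..r div 2}"
      show "(\<Sum>i=1..r. F i j) = 0"
      proof (cases "j = 0")
        case False
        then have "Suc r choose (2 * j + 1) = 0" using j by (intro binomial_eq_0) auto
        then show ?thesis by (simp only: F_def of_nat_0 mult_zero_left sum.neutral_const)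
      qed (auto simp: F_def intro!: sum.neutral)
    qed
  qed auto
  also have "\<dots> = (\<Sum>j\<in>{1..r div 2}. \<Sum>i=1..j. F i j)"
  proof (rule sum.cong[OF refl])
    fix j assume "j \<in> {1..r div 2}"
    then show "(\<Sum>i=1..r. F i j) = (\<Sum>i=1..j. F i j)"
      by (intro sum.mono_neutral_right) (auto simp: F_def)
  qed
  finally show ?thesis by (simp add: F_def)
qed

declare ccoef.simps [simp del]

lemma ccoef_eq_sqrt_coeff: "ccoef r = (-1) ^ r * sqrt_coeff r"
proof (induction r rule: less_induct)
  case (less r)
  show ?case
  proof (cases "r \<ge> 2")
    case False
    then have "r = 0 \<or> r = 1" by auto
    then show ?thesis by (auto simp: ccoef.simps)
  next
    case True
    have "(\<Sum>j\<in>{1..r div 2}. \<Sum>i\<in>{1..j}.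
          real ((r + 1) choose (2 * j + 1)) * real (j choose i) * ccoef (r - i)) =
        (-1) ^ r * (\<Sum>j\<in>{1..r div 2}. \<Sum>i\<in>{1..j}.
          real (Suc r choose (2 * j + 1)) * ((-1) ^ i * real (j choose i)) * sqrt_coeff (r - i))"
      unfolding sum_distrib_left
    proof (intro sum.cong refl)
      fix j i assume "j \<in> {1..r div 2}" "i \<in> {1..j}"
      then have "i < r" "r - i < r" by auto
      moreover from \<open>i < r\<close> have "(-1 :: real) ^ (r - i) = (-1) ^ r * (-1) ^ i"
        by (simp add: power_diff_conv_inverse)
      ultimately have "ccoef (r - i) = (-1) ^ r * (-1) ^ i * sqrt_coeff (r - i)"
        using less.IH[of "r - i"] by simp
      then show "real ((r + 1) choose (2 * j + 1)) * real (j choose i) * ccoef (r - i) =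
          (-1) ^ r *
          (real (Suc r choose (2 * j + 1)) * ((-1) ^ i * real (j choose i)) * sqrt_coeff (r - i))"
        by (simp only: Suc_eq_plus1 mult_ac)
    qed
    moreover have "ccoef r = - (1 / 2 ^ r) * (\<Sum>j\<in>{1..r div 2}. \<Sum>i\<in>{1..j}.
        real ((r + 1) choose (2 * j + 1)) * real (j choose i) * ccoef (r - i))"
      using True by (subst ccoef.simps) simp
    ultimately have "ccoef r = - (1 / 2 ^ r) * ((-1) ^ r * (- (2 ^ r * sqrt_coeff r)))"
      using sqrt_coeff_binomial_rec[OF True] by (simp only: add_eq_0_iff)
    then show ?thesis by simp
  qed
qed

section \<open>A linear operator on a subspace, acting on quadruples\<close>

lemma sum_sum_truncated_convolution:
  fixes G :: "nat \<Rightarrow> 'a::real_vector"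
  assumes "\<And>r. r > n \<Longrightarrow> G r = 0"
  shows "(\<Sum>k=1..n. \<Sum>l=1..n. (c k * c l) *\<^sub>R G (k + l)) =
    (\<Sum>r=2..n. (\<Sum>k=1..r-1. c k * c (r - k)) *\<^sub>R G r)"
proof -
  let ?P = "{(k, l). 1 \<le> k \<and> 1 \<le> l \<and> k + l \<le> n}"
  have support: "r \<le> n" if "G r \<noteq> 0" for r using assms that by (meson not_le)
  have "(\<Sum>k=1..n. \<Sum>l=1..n. (c k * c l) *\<^sub>R G (k + l)) =
      (\<Sum>(k, l)\<in>{1..n} \<times> {1..n}. (c k * c l) *\<^sub>R G (k + l))"
    by (rule sum.cartesian_product)
  also have "\<dots> = (\<Sum>(k, l)\<in>?P. (c k * c l) *\<^sub>R G (k + l))"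
    by (rule sum.mono_neutral_right) (auto dest: support)
  also have "\<dots> = (\<Sum>(r, k)\<in>Sigma {2..n} (\<lambda>r. {1..r-1}). (c k * c (r - k)) *\<^sub>R G r)"
    by (rule sum.reindex_bij_witness[where i = "\<lambda>(r, k). (k, r - k)" and j = "\<lambda>(k, l). (k + l, k)"])
      auto
  also have "\<dots> = (\<Sum>r=2..n. (\<Sum>k=1..r-1. c k * c (r - k)) *\<^sub>R G r)"
    by (simp add: sum.Sigma[symmetric] scaleR_sum_left)
  finally show ?thesis .
qed

lemma funpow_apply_funpow: "(f ^^ m) ((f ^^ n) x) = (f ^^ (m + n)) x"
  by (simp add: funpow_add)

definition quad_map :: "('a \<Rightarrow> 'b) \<Rightarrow> 'a \<times> 'a \<times> 'a \<times> 'a \<Rightarrow> 'b \<times> 'b \<times> 'b \<times> 'b" where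
  "quad_map g = (\<lambda>(a, b, c, d). (g a, g b, g c, g d))"

lemma quad_map_simp [simp]: "quad_map g (a, b, c, d) = (g a, g b, g c, g d)"
  by (simp add: quad_map_def)

locale subspace_operator =
  fixes W :: "'v::real_vector set" and D :: "'v \<Rightarrow> 'v"
  assumes subspace: "subspace W"
    and D_closed: "f \<in> W \<Longrightarrow> D f \<in> W"
    and D_add: "f \<in> W \<Longrightarrow> g \<in> W \<Longrightarrow> D (f + g) = D f + D g"
    and D_scaleR: "f \<in> W \<Longrightarrow> D (c *\<^sub>R f) = c *\<^sub>R D f"
begin

lemma D_zero [simp]: "D 0 = 0"
  using D_scaleR[of 0 0] subspace_0[OF subspace] by simp

lemma D_minus: "f \<in> W \<Longrightarrow> D (- f) = - D f"
  using D_scaleR[of f "-1"] by simp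

lemma D_diff: "f \<in> W \<Longrightarrow> g \<in> W \<Longrightarrow> D (f - g) = D f - D g"
  using D_add[of f "- g"] D_minus[of g] subspace_neg[OF subspace] by simp

lemma D_sum: "(\<And>i. i \<in> A \<Longrightarrow> f i \<in> W) \<Longrightarrow> D (\<Sum>i\<in>A. f i) = (\<Sum>i\<in>A. D (f i))"
  by (induction A rule: infinite_finite_induct) (auto simp: D_add subspace_sum[OF subspace])

lemma subspace_operator_funpow: "subspace_operator W (D ^^ k)"
proof (induction k)
  case 0
  show ?case by unfold_locales (simp_all add: subspace)
next
  case (Suc k)
  interpret Dk: subspace_operator W "D ^^ k" by (fact Suc.IH)
  show ?case
    by unfold_locales (simp_all add: subspace D_closed Dk.D_closed D_add Dk.D_add D_scaleR Dk.D_scaleR)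
qed

lemmas D_funpow_zero [simp] = subspace_operator.D_zero[OF subspace_operator_funpow]
  and D_funpow_closed = subspace_operator.D_closed[OF subspace_operator_funpow]
  and D_funpow_add = subspace_operator.D_add[OF subspace_operator_funpow]
  and D_funpow_scaleR = subspace_operator.D_scaleR[OF subspace_operator_funpow]
  and D_funpow_minus = subspace_operator.D_minus[OF subspace_operator_funpow]
  and D_funpow_diff = subspace_operator.D_diff[OF subspace_operator_funpow]
  and D_funpow_sum = subspace_operator.D_sum[OF subspace_operator_funpow]

lemma D_funpow_eq_0_mono:
  assumes "(D ^^ i) f = 0" "i \<le> j"
  shows "(D ^^ j) f = 0"
proof -
  have "(D ^^ j) f = (D ^^ (j - i)) ((D ^^ i) f)"
    using \<open>i \<le> j\<close> by (simp add: funpow_apply_funpow)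
  then show ?thesis using assms(1) by simp
qed

text \<open>The action of the Dirac operator in X on the coefficients of F, see dirX_Ffun below.\<close>

definition dirac_coeffs :: "'v \<times> 'v \<times> 'v \<times> 'v \<Rightarrow> 'v \<times> 'v \<times> 'v \<times> 'v" where
  "dirac_coeffs = (\<lambda>(a, b, c, d). (D c, D d, D a + 2 *\<^sub>R d, D b - 2 *\<^sub>R c))"

definition dirac_coeffs_conj :: "'v \<times> 'v \<times> 'v \<times> 'v \<Rightarrow> 'v \<times> 'v \<times> 'v \<times> 'v" where
  "dirac_coeffs_conj = (\<lambda>(a, b, c, d). (D c - 2 *\<^sub>R b, D d + 2 *\<^sub>R a, D a, D b))"

lemma dirac_coeffs_simp [simp]:
  "dirac_coeffs (a, b, c, d) = (D c, D d, D a + 2 *\<^sub>R d, D b - 2 *\<^sub>R c)"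
  by (simp add: dirac_coeffs_def)

lemma dirac_coeffs_conj_simp [simp]:
  "dirac_coeffs_conj (a, b, c, d) = (D c - 2 *\<^sub>R b, D d + 2 *\<^sub>R a, D a, D b)"
  by (simp add: dirac_coeffs_conj_def)

lemma subspace_operator_dirac_coeffs: "subspace_operator (W \<times> W \<times> W \<times> W) dirac_coeffs"
proof unfold_locales
  show "subspace (W \<times> W \<times> W \<times> W)"
    using subspace unfolding subspace_def by (auto simp: zero_prod_def)
  fix v w c assume "v \<in> W \<times> W \<times> W \<times> W" "w \<in> W \<times> W \<times> W \<times> W"
  then show "dirac_coeffs v \<in> W \<times> W \<times> W \<times> W"
    and "dirac_coeffs (v + w) = dirac_coeffs v + dirac_coeffs w"
    and "dirac_coeffs (c *\<^sub>R v) = c *\<^sub>R dirac_coeffs v"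
    using subspace
    by (auto simp: D_closed D_add D_scaleR subspace_add subspace_diff subspace_scale algebra_simps)
qed

lemmas dirac_coeffs_funpow_closed = subspace_operator.D_funpow_closed[OF subspace_operator_dirac_coeffs]
  and dirac_coeffs_funpow_add = subspace_operator.D_funpow_add[OF subspace_operator_dirac_coeffs]

lemma dirac_coeffs_conj_dirac_coeffs:
  "v \<in> W \<times> W \<times> W \<times> W \<Longrightarrow> dirac_coeffs_conj (dirac_coeffs v) = quad_map (D ^^ 2) v"
  using subspace
  by (auto simp: D_closed D_add D_diff D_scaleR subspace_scale numeral_2_eq_2)

lemma dirac_coeffs_conj_closed: "v \<in> W \<times> W \<times> W \<times> W \<Longrightarrow> dirac_coeffs_conj v \<in> W \<times> W \<times> W \<times> W"
  using subspace by (auto simp: D_closed subspace_add subspace_diff subspace_scale)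

lemma dirac_coeffs_quad_map:
  "v \<in> W \<times> W \<times> W \<times> W \<Longrightarrow>
    dirac_coeffs (quad_map (D ^^ i) v) = quad_map (D ^^ i) (dirac_coeffs v)"
  using subspace
  by (auto simp: D_funpow_add D_funpow_diff D_funpow_scaleR D_closed subspace_scale funpow_swap1)

lemma dirac_coeffs_conj_quad_map:
  "v \<in> W \<times> W \<times> W \<times> W \<Longrightarrow>
    dirac_coeffs_conj (quad_map (D ^^ i) v) = quad_map (D ^^ i) (dirac_coeffs_conj v)"
  using subspace
  by (auto simp: D_funpow_add D_funpow_diff D_funpow_scaleR D_closed subspace_scale funpow_swap1)

lemma dirac_coeffs_funpow_quad_map:
  "v \<in> W \<times> W \<times> W \<times> W \<Longrightarrow>
    (dirac_coeffs ^^ k) (quad_map (D ^^ i) v) = quad_map (D ^^ i) ((dirac_coeffs ^^ k) v)"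
  by (induction k) (simp_all add: dirac_coeffs_quad_map dirac_coeffs_funpow_closed)

lemma dirac_coeffs_conj_funpow_quad_map:
  "v \<in> W \<times> W \<times> W \<times> W \<Longrightarrow>
    (dirac_coeffs_conj ^^ k) (quad_map (D ^^ i) v) = quad_map (D ^^ i) ((dirac_coeffs_conj ^^ k) v)"
proof (induction k)
  case (Suc k)
  have "(dirac_coeffs_conj ^^ k) v \<in> W \<times> W \<times> W \<times> W"
    using Suc.prems by (induction k) (simp_all add: dirac_coeffs_conj_closed)
  then show ?case using Suc by (simp add: dirac_coeffs_conj_quad_map)
qed simp

lemma dirac_coeffs_conj_funpow_dirac_coeffs_funpow:
  "v \<in> W \<times> W \<times> W \<times> W \<Longrightarrow>
    (dirac_coeffs_conj ^^ k) ((dirac_coeffs ^^ k) v) = quad_map (D ^^ (2 * k)) v"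
proof (induction k arbitrary: v)
  case 0
  then show ?case by (cases v) auto
next
  case (Suc k)
  have "(dirac_coeffs_conj ^^ Suc k) ((dirac_coeffs ^^ Suc k) v) =
      (dirac_coeffs_conj ^^ k) (dirac_coeffs_conj (dirac_coeffs ((dirac_coeffs ^^ k) v)))"
    by (simp add: funpow_swap1)
  also have "\<dots> = quad_map (D ^^ 2) ((dirac_coeffs_conj ^^ k) ((dirac_coeffs ^^ k) v))"
    using Suc.prems
    by (simp add: dirac_coeffs_conj_dirac_coeffs dirac_coeffs_funpow_closed
        dirac_coeffs_conj_funpow_quad_map)
  also have "\<dots> = quad_map (D ^^ (2 * Suc k)) v"
    using Suc by (cases v) (simp add: numeral_2_eq_2)
  finally show ?case .
qed

lemma dirac_coeffs_funpow_eq_0_imp_nilpotent: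
  assumes "a \<in> W" "b \<in> W" "c \<in> W" "d \<in> W" "(dirac_coeffs ^^ k) (a, b, c, d) = 0"
  shows "(D ^^ (2 * k)) a = 0 \<and> (D ^^ (2 * k)) b = 0 \<and> (D ^^ (2 * k)) c = 0 \<and> (D ^^ (2 * k)) d = 0"
proof -
  have "(dirac_coeffs_conj ^^ k) 0 = 0"
    by (induction k) (simp_all add: zero_prod_def)
  then show ?thesis
    using dirac_coeffs_conj_funpow_dirac_coeffs_funpow[of "(a, b, c, d)" k] assms
    by (simp add: zero_prod_def)
qed

text \<open>D^-1 (1 - sqrt (1 - D^2)), truncated at order 2 n - 1.\<close>

definition root_op :: "nat \<Rightarrow> 'v \<Rightarrow> 'v" where
  "root_op n f = (\<Sum>k=1..n. sqrt_coeff k *\<^sub>R (D ^^ (2 * k - 1)) f)"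

lemma subspace_operator_root_op: "subspace_operator W (root_op n)"
  using subspace
  by unfold_locales
    (simp_all add: root_op_def subspace_sum subspace_scale D_funpow_closed D_funpow_add D_funpow_scaleR
      scaleR_add_right sum.distrib scaleR_sum_right mult.commute)

lemmas root_op_zero [simp] = subspace_operator.D_zero[OF subspace_operator_root_op]
  and root_op_closed = subspace_operator.D_closed[OF subspace_operator_root_op]
  and root_op_minus = subspace_operator.D_minus[OF subspace_operator_root_op]

lemma D_funpow_root_op: "f \<in> W \<Longrightarrow> (D ^^ i) (root_op n f) = root_op n ((D ^^ i) f)"
  unfolding root_op_def using subspace
  by (simp add: D_funpow_sum D_funpow_scaleR subspace_scale D_funpow_closed funpow_apply_funpow add.commute)

text \<open>The truncation of (1 - s)^2 - 2 (1 - s) + D^2 = 0 for s = sqrt (1 - D^2), divided by D.\<close>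

lemma root_op_quadratic:
  assumes n: "n \<ge> 1" and f: "f \<in> W" and nil: "(D ^^ (2 * n)) f = 0"
  shows "D f - 2 *\<^sub>R root_op n f + D (root_op n (root_op n f)) = 0"
proof -
  define G where "G r = (D ^^ (2 * r - 1)) f" for r
  have G_closed: "G r \<in> W" for r by (simp add: G_def D_funpow_closed f)
  have "D (root_op n (root_op n f)) =
      (\<Sum>k=1..n. \<Sum>l=1..n. (sqrt_coeff k * sqrt_coeff l) *\<^sub>R G (k + l))"
  proof -
    have "D ((D ^^ (2 * k - 1)) ((D ^^ (2 * l - 1)) f)) = G (k + l)" if "k \<ge> 1" "l \<ge> 1" for k l
    proof -
      have e: "2 * (k + l) - 1 = Suc (2 * k - 1 + (2 * l - 1))" using that by simp
      show ?thesis unfolding G_def e by (simp add: funpow_apply_funpow)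
    qed
    then show ?thesis
      using subspace f
      by (simp add: root_op_def D_sum D_scaleR D_funpow_sum D_funpow_scaleR D_funpow_closed subspace_sum
          subspace_scale scaleR_sum_right)
  qed
  also have "\<dots> = (\<Sum>r=2..n. (2 * sqrt_coeff r) *\<^sub>R G r)"
  proof -
    have "G r = 0" if "r > n" for r
      using D_funpow_eq_0_mono[OF nil, of "2 * r - 1"] that by (simp add: G_def)
    then have "(\<Sum>k=1..n. \<Sum>l=1..n. (sqrt_coeff k * sqrt_coeff l) *\<^sub>R G (k + l)) =
        (\<Sum>r=2..n. (\<Sum>k=1..r-1. sqrt_coeff k * sqrt_coeff (r - k)) *\<^sub>R G r)"
      by (rule sum_sum_truncated_convolution)
    also have "\<dots> = (\<Sum>r=2..n. (2 * sqrt_coeff r) *\<^sub>R G r)"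
      by (intro sum.cong refl) (simp add: sqrt_coeff_rec)
    finally show ?thesis .
  qed
  also have "\<dots> = 2 *\<^sub>R root_op n f - D f"
  proof -
    have "{1..n} = insert 1 {2..n}" using n by auto
    then show ?thesis by (simp add: root_op_def G_def scaleR_sum_right scaleR_add_right)
  qed
  finally show ?thesis by simp
qed

lemma dirac_coeffs_root_op:
  assumes "n \<ge> 1" "a \<in> W" "b \<in> W" "(D ^^ (2 * n)) a = 0" "(D ^^ (2 * n)) b = 0"
  shows "dirac_coeffs (a, b, root_op n b, - root_op n a) =
    (D (root_op n b), - D (root_op n a), root_op n (- D (root_op n a)), - root_op n (D (root_op n b)))"
proof -
  have "root_op n (D (root_op n f)) = D (root_op n (root_op n f))" if "f \<in> W" for f
    using D_funpow_root_op[of "root_op n f" 1] that by (simp add: root_op_closed)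
  then show ?thesis
    using root_op_quadratic[OF assms(1,2,4)] root_op_quadratic[OF assms(1,3,5)] assms(2,3)
    by (simp add: D_minus root_op_minus D_closed root_op_closed algebra_simps eq_neg_iff_add_eq_0)
qed

lemma D_funpow_D_root_op_eq_0:
  assumes "f \<in> W" "(D ^^ (2 * Suc j)) f = 0"
  shows "(D ^^ (2 * j)) (D (root_op n f)) = 0"
proof -
  have "(D ^^ (2 * j)) (D (root_op n f)) = (D ^^ Suc (2 * j)) (root_op n f)"
    by (simp only: funpow_Suc_right o_apply)
  also have "\<dots> = root_op n ((D ^^ Suc (2 * j)) f)"
    using assms(1) by (rule D_funpow_root_op)
  also have "\<dots> = 0"
    unfolding root_op_def funpow_apply_funpow
  proof (intro sum.neutral ballI)
    fix k assume "k \<in> {1..n}"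
    then have "(D ^^ (2 * k - 1 + Suc (2 * j))) f = 0"
      by (intro D_funpow_eq_0_mono[OF assms(2)]) auto
    then show "sqrt_coeff k *\<^sub>R (D ^^ (2 * k - 1 + Suc (2 * j))) f = 0" by simp
  qed
  finally show ?thesis .
qed

lemma dirac_coeffs_funpow_root_op:
  assumes "n \<ge> 1" "a \<in> W" "b \<in> W" "(D ^^ (2 * n)) a = 0" "(D ^^ (2 * n)) b = 0" "k \<le> n"
  shows "\<exists>a' b'. a' \<in> W \<and> b' \<in> W \<and> (D ^^ (2 * (n - k))) a' = 0 \<and> (D ^^ (2 * (n - k))) b' = 0 \<and>
    (dirac_coeffs ^^ k) (a, b, root_op n b, - root_op n a) = (a', b', root_op n b', - root_op n a')"
  using \<open>k \<le> n\<close>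
proof (induction k)
  case 0
  then show ?case using assms by auto
next
  case (Suc k)
  then obtain a' b' where a'b': "a' \<in> W" "b' \<in> W" "(D ^^ (2 * Suc (n - Suc k))) a' = 0"
    "(D ^^ (2 * Suc (n - Suc k))) b' = 0"
    and step: "(dirac_coeffs ^^ k) (a, b, root_op n b, - root_op n a) =
      (a', b', root_op n b', - root_op n a')"
    by (auto simp: Suc_diff_Suc)
  have "2 * Suc (n - Suc k) \<le> 2 * n" using Suc.prems by simp
  then have "(D ^^ (2 * n)) a' = 0" "(D ^^ (2 * n)) b' = 0"
    using D_funpow_eq_0_mono a'b'(3,4) by blast+
  then have "(dirac_coeffs ^^ Suc k) (a, b, root_op n b, - root_op n a) =
      (D (root_op n b'), - D (root_op n a'),
       root_op n (- D (root_op n a')), - root_op n (D (root_op n b')))"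
    using dirac_coeffs_root_op[OF assms(1) a'b'(1,2)] step by simp
  moreover have "(D ^^ (2 * (n - Suc k))) (- D (root_op n a')) = 0"
    using D_funpow_D_root_op_eq_0[OF a'b'(1,3)] a'b'(1)
    by (simp add: D_funpow_minus D_closed root_op_closed)
  ultimately show ?case
    using D_funpow_D_root_op_eq_0[OF a'b'(2,4)] a'b'(1,2)
    by (intro exI[of _ "D (root_op n b')"] exI[of _ "- D (root_op n a')"])
      (simp add: D_closed root_op_closed subspace_neg[OF subspace])
qed

text \<open>On such quadruples the step acts as (x, y, u, v) \<mapsto> (D u, D v, 2 v, - 2 u).\<close>

lemma dirac_coeffs_funpow_kernel_low_degree:
  assumes "x \<in> W" "y \<in> W" "u \<in> W" "v \<in> W" "D x = 0" "D y = 0" "D (D u) = 0" "D (D v) = 0"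
    and "(dirac_coeffs ^^ k) (x, y, u, v) = 0"
  shows "u = 0 \<and> v = 0"
  using assms
proof (induction k arbitrary: x y u v)
  case 0
  then show ?case by (simp add: zero_prod_def)
next
  case (Suc k)
  have "(dirac_coeffs ^^ k) (D u, D v, 2 *\<^sub>R v, - (2 *\<^sub>R u)) = 0"
    using Suc.prems by (simp add: funpow_Suc_right del: funpow.simps)
  then have "2 *\<^sub>R v = 0 \<and> - (2 *\<^sub>R u) = 0"
    using Suc.prems subspace
    by (intro Suc.IH) (simp_all add: D_closed D_scaleR D_minus subspace_scale subspace_neg)
  then show ?case by simp
qed

lemma dirac_coeffs_funpow_kernel:
  assumes "g \<in> W" "h \<in> W" "(D ^^ (2 * j)) g = 0" "(D ^^ (2 * j)) h = 0"
    and "(dirac_coeffs ^^ k) (0, 0, g, h) = 0"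
  shows "g = 0 \<and> h = 0"
  using assms
proof (induction j arbitrary: g h)
  case 0
  then show ?case by simp
next
  case (Suc j)
  have "(dirac_coeffs ^^ k) (0, 0, (D ^^ 2) g, (D ^^ 2) h) =
      quad_map (D ^^ 2) ((dirac_coeffs ^^ k) (0, 0, g, h))"
    using Suc.prems(1,2) subspace_0[OF subspace]
    by (subst dirac_coeffs_funpow_quad_map[symmetric]) simp_all
  also have "\<dots> = 0"
    using Suc.prems by (simp add: zero_prod_def)
  finally have "(D ^^ 2) g = 0 \<and> (D ^^ 2) h = 0"
    using Suc.prems
    by (intro Suc.IH) (simp_all add: D_funpow_closed funpow_apply_funpow)
  then show ?case
    using Suc.prems subspace_0[OF subspace]
    by (intro dirac_coeffs_funpow_kernel_low_degree[of 0 0 _ _ k]) (simp_all add: numeral_2_eq_2)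
qed

theorem dirac_coeffs_funpow_eq_0_iff:
  assumes "n \<ge> 1" "a \<in> W" "b \<in> W" "c \<in> W" "d \<in> W"
  shows "(dirac_coeffs ^^ n) (a, b, c, d) = 0 \<longleftrightarrow>
    (D ^^ (2 * n)) a = 0 \<and> (D ^^ (2 * n)) b = 0 \<and> c = root_op n b \<and> d = - root_op n a"
proof
  assume "(D ^^ (2 * n)) a = 0 \<and> (D ^^ (2 * n)) b = 0 \<and> c = root_op n b \<and> d = - root_op n a"
  then show "(dirac_coeffs ^^ n) (a, b, c, d) = 0"
    using dirac_coeffs_funpow_root_op[OF assms(1-3), of n] by (auto simp: zero_prod_def)
next
  assume T: "(dirac_coeffs ^^ n) (a, b, c, d) = 0"
  then have nil: "(D ^^ (2 * n)) a = 0" "(D ^^ (2 * n)) b = 0"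
    "(D ^^ (2 * n)) c = 0" "(D ^^ (2 * n)) d = 0"
    using dirac_coeffs_funpow_eq_0_imp_nilpotent assms(2-5) by blast+
  have particular: "(dirac_coeffs ^^ n) (a, b, root_op n b, - root_op n a) = 0"
    using dirac_coeffs_funpow_root_op[OF assms(1-3) nil(1,2), of n] by (auto simp: zero_prod_def)
  have "(dirac_coeffs ^^ n)
      ((a, b, root_op n b, - root_op n a) + (0, 0, c - root_op n b, d + root_op n a)) =
      (dirac_coeffs ^^ n) (a, b, root_op n b, - root_op n a) +
      (dirac_coeffs ^^ n) (0, 0, c - root_op n b, d + root_op n a)"
    using assms subspace
    by (intro dirac_coeffs_funpow_add)
      (simp_all add: subspace_0 subspace_diff subspace_add subspace_neg root_op_closed)
  then have "(dirac_coeffs ^^ n) (0, 0, c - root_op n b, d + root_op n a) = 0"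
    using T particular by simp
  moreover have "(D ^^ (2 * n)) (c - root_op n b) = 0" "(D ^^ (2 * n)) (d + root_op n a) = 0"
    using nil assms(2-5) by (simp_all add: D_funpow_diff D_funpow_add D_funpow_root_op root_op_closed)
  ultimately have "c - root_op n b = 0 \<and> d + root_op n a = 0"
    using assms(2-5) subspace
    by (intro dirac_coeffs_funpow_kernel[of _ _ n])
      (simp_all add: subspace_diff subspace_add root_op_closed)
  then show "(D ^^ (2 * n)) a = 0 \<and> (D ^^ (2 * n)) b = 0 \<and> c = root_op n b \<and> d = - root_op n a"
    using nil by (simp add: eq_neg_iff_add_eq_0)
qed

end

section \<open>Multiplication by generators of the Clifford algebra\<close>

instantiation "fun" :: (type, real_vector) real_vector
begin

definition scaleR_fun :: "real \<Rightarrow> ('a \<Rightarrow> 'b) \<Rightarrow> 'a \<Rightarrow> 'b" where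
  "scaleR_fun c f = (\<lambda>x. c *\<^sub>R f x)"

instance
  by standard (simp_all add: scaleR_fun_def fun_eq_iff scaleR_add_right scaleR_add_left)

end

lemma scaleR_fun_apply [simp]: "(c *\<^sub>R f) x = c *\<^sub>R f x"
  by (simp add: scaleR_fun_def)

lemma sum_fun_apply: "(\<Sum>i\<in>A. f i) x = (\<Sum>i\<in>A. f i x)"
  by (induction A rule: infinite_finite_induct) auto

lemma czero_eq_0: "czero = 0"
  by (simp add: czero_def zero_fun_def)

lemma sym_diff_sym_diff_cancel [simp]: "sym_diff (sym_diff C A) A = C"
  by blast

text \<open>Left multiplication by e_j in the blade basis: e_j e_B = blade_sign {j} B e_(B sym_diff {j}).\<close>

definition mul_egen :: "nat \<Rightarrow> clif \<Rightarrow> clif" where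
  "mul_egen j u = (\<lambda>C. blade_sign {j} (sym_diff C {j}) * u (sym_diff C {j}))"

lemma cmul_expand:
  assumes "clif_in m u"
  shows "cmul m e u C = (\<Sum>A\<in>Pow {1..m}. e A * blade_sign A (sym_diff C A) * u (sym_diff C A))"
  unfolding cmul_def
proof (rule sum.cong[OF refl])
  fix A assume "A \<in> Pow {1..m}"
  have "sym_diff A B = C \<longleftrightarrow> B = sym_diff C A" for B by blast
  then have "(\<Sum>B\<in>Pow {1..m}. if sym_diff A B = C then blade_sign A B * e A * u B else 0) =
      (\<Sum>B\<in>Pow {1..m}. if B = sym_diff C A then blade_sign A B * e A * u B else 0)"
    by simp
  also have "\<dots> = e A * blade_sign A (sym_diff C A) * u (sym_diff C A)"
    using assms by (auto simp: clif_in_def)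
  finally show "(\<Sum>B\<in>Pow {1..m}. if sym_diff A B = C then blade_sign A B * e A * u B else 0) =
      e A * blade_sign A (sym_diff C A) * u (sym_diff C A)" .
qed

lemma cmul_egen:
  assumes "j \<in> {1..m}" "clif_in m u"
  shows "cmul m (egen j) u = mul_egen j u"
proof
  fix C
  have "cmul m (egen j) u C =
      (\<Sum>A\<in>Pow {1..m}. if A = {j} then blade_sign {j} (sym_diff C {j}) * u (sym_diff C {j}) else 0)"
    unfolding cmul_expand[OF assms(2)] by (intro sum.cong refl) (auto simp: egen_def)
  then show "cmul m (egen j) u C = mul_egen j u C"
    using assms(1) by (simp add: mul_egen_def)
qed

lemma cmul_cplx:
  assumes "m \<ge> 1" "clif_in m u"
  shows "cmul m (cplx w) u = Re w *\<^sub>R u + Im w *\<^sub>R mul_egen 1 u"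
proof
  fix C
  have "cmul m (cplx w) u C = (\<Sum>A\<in>Pow {1..m}.
      (if A = {} then Re w * u C else 0) + (if A = {1} then Im w * mul_egen 1 u C else 0))"
    unfolding cmul_expand[OF assms(2)]
    by (intro sum.cong refl) (auto simp: cplx_def blade_sign_def mul_egen_def)
  then show "cmul m (cplx w) u C = (Re w *\<^sub>R u + Im w *\<^sub>R mul_egen 1 u) C"
    using assms(1) by (simp add: sum.distrib)
qed

lemma clif_in_cmul: "clif_in m (cmul m e u)"
  unfolding clif_in_def cmul_def
proof (intro allI impI sum.neutral ballI)
  fix C A B assume "\<not> C \<subseteq> {1..m}" "A \<in> Pow {1..m}" "B \<in> Pow {1..m}"
  then have "sym_diff A B \<noteq> C" by auto
  then show "(if sym_diff A B = C then blade_sign A B * e A * u B else 0) = 0" by simp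
qed

lemma clif_in_mul_egen: "j \<in> {1..m} \<Longrightarrow> clif_in m u \<Longrightarrow> clif_in m (mul_egen j u)"
  using clif_in_cmul[of m "egen j" u] by (simp add: cmul_egen)

lemma blade_sign_singleton:
  "blade_sign {j} B = (-1) ^ (card {b\<in>B. b < j} + (if j \<in> B then 1 else 0))"
proof -
  have "{(a, b). a \<in> {j} \<and> b \<in> B \<and> b < a} = (\<lambda>b. (j, b)) ` {b\<in>B. b < j}" by auto
  then have "card {(a, b). a \<in> {j} \<and> b \<in> B \<and> b < a} = card {b\<in>B. b < j}"
    by (simp add: card_image inj_on_def)
  then show ?thesis by (simp add: blade_sign_def)
qed

lemma blade_sign_singleton_toggle:
  assumes "j \<noteq> k"
  shows "blade_sign {j} (sym_diff B {k}) = (if k < j then -1 else 1) * blade_sign {j} B"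
proof -
  have fin: "finite {b\<in>B. b < j}" by simp
  have "(-1 :: real) ^ card {b \<in> sym_diff B {k}. b < j} =
      (if k < j then -1 else 1) * (-1) ^ card {b\<in>B. b < j}"
  proof (cases "k < j")
    case True
    show ?thesis
    proof (cases "k \<in> B")
      case True
      then have "{b \<in> sym_diff B {k}. b < j} = {b\<in>B. b < j} - {k}" by auto
      moreover have "card {b\<in>B. b < j} = Suc (card ({b\<in>B. b < j} - {k}))"
        using True \<open>k < j\<close> fin by (intro card_Suc_Diff1[symmetric]) auto
      ultimately show ?thesis using \<open>k < j\<close> by simp
    next
      case False
      then have "{b \<in> sym_diff B {k}. b < j} = insert k {b\<in>B. b < j}" using \<open>k < j\<close> by auto
      then show ?thesis using \<open>k < j\<close> False by simp
    qed
  next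
    case False
    then have "{b \<in> sym_diff B {k}. b < j} = {b\<in>B. b < j}" by auto
    then show ?thesis using False by simp
  qed
  moreover have "j \<in> sym_diff B {k} \<longleftrightarrow> j \<in> B" using assms by auto
  ultimately show ?thesis by (simp add: blade_sign_singleton power_add)
qed

lemma mul_egen_mul_egen: "mul_egen j (mul_egen j u) = - u"
proof
  fix C
  have "{b \<in> sym_diff C {j}. b < j} = {b\<in>C. b < j}" "j \<in> sym_diff C {j} \<longleftrightarrow> j \<notin> C" by auto
  then have "blade_sign {j} (sym_diff C {j}) * blade_sign {j} C = -1"
    by (simp add: blade_sign_singleton power_add)
  then show "mul_egen j (mul_egen j u) C = (- u) C"
    by (simp add: mul_egen_def mult.assoc[symmetric])
qed

lemma mul_egen_anticommute:
  assumes "j \<noteq> k"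
  shows "mul_egen j (mul_egen k u) = - mul_egen k (mul_egen j u)"
proof
  fix C
  define E where "E = sym_diff (sym_diff C {j}) {k}"
  have "sym_diff C {j} = sym_diff E {k}" "sym_diff C {k} = sym_diff E {j}"
    unfolding E_def by blast+
  then have "mul_egen j (mul_egen k u) C = blade_sign {j} (sym_diff E {k}) * blade_sign {k} E * u E"
    and "mul_egen k (mul_egen j u) C = blade_sign {k} (sym_diff E {j}) * blade_sign {j} E * u E"
    by (simp_all add: mul_egen_def mult.assoc)
  then show "mul_egen j (mul_egen k u) C = (- mul_egen k (mul_egen j u)) C"
    using blade_sign_singleton_toggle[OF assms, of E] blade_sign_singleton_toggle[of k j E] assms
    by auto
qed

lemma linear_mul_egen: "linear (mul_egen j)"
  by (simp add: linear_iff mul_egen_def fun_eq_iff algebra_simps)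

section \<open>Partial derivatives\<close>

lemma second_difference_mean_value:
  fixes \<phi> \<phi>1 \<phi>12 :: "real \<Rightarrow> real \<Rightarrow> real"
  assumes d1: "\<And>s t. ((\<lambda>s. \<phi> s t) has_real_derivative \<phi>1 s t) (at s)"
    and d12: "\<And>s t. ((\<lambda>t. \<phi>1 s t) has_real_derivative \<phi>12 s t) (at t)"
    and "h > 0"
  obtains \<xi> \<eta> where "a < \<xi>" "\<xi> < a + h" "b < \<eta>" "\<eta> < b + h"
    "\<phi> (a + h) (b + h) - \<phi> (a + h) b - \<phi> a (b + h) + \<phi> a b = h * (h * \<phi>12 \<xi> \<eta>)"
proof -
  have "((\<lambda>s. \<phi> s (b + h) - \<phi> s b) has_real_derivative \<phi>1 s (b + h) - \<phi>1 s b) (at s)" for s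
    by (intro DERIV_diff d1)
  then obtain \<xi> where \<xi>: "a < \<xi>" "\<xi> < a + h"
    "\<phi> (a + h) (b + h) - \<phi> (a + h) b - (\<phi> a (b + h) - \<phi> a b) = h * (\<phi>1 \<xi> (b + h) - \<phi>1 \<xi> b)"
    using MVT2[of a "a + h" "\<lambda>s. \<phi> s (b + h) - \<phi> s b" "\<lambda>s. \<phi>1 s (b + h) - \<phi>1 s b"] \<open>h > 0\<close>
    by auto
  obtain \<eta> where "b < \<eta>" "\<eta> < b + h" "\<phi>1 \<xi> (b + h) - \<phi>1 \<xi> b = h * \<phi>12 \<xi> \<eta>"
    using MVT2[of b "b + h" "\<phi>1 \<xi>" "\<phi>12 \<xi>"] d12 \<open>h > 0\<close> by auto
  with \<xi> show ?thesis by (intro that[of \<xi> \<eta>]) (simp_all add: algebra_simps)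
qed

text \<open>Schwarz's theorem, from the second difference computed in both orders.\<close>

lemma mixed_partials_eq:
  fixes \<phi> \<phi>1 \<phi>2 \<phi>12 \<phi>21 :: "real \<Rightarrow> real \<Rightarrow> real"
  assumes d1: "\<And>s t. ((\<lambda>s. \<phi> s t) has_real_derivative \<phi>1 s t) (at s)"
    and d2: "\<And>s t. ((\<lambda>t. \<phi> s t) has_real_derivative \<phi>2 s t) (at t)"
    and d12: "\<And>s t. ((\<lambda>t. \<phi>1 s t) has_real_derivative \<phi>12 s t) (at t)"
    and d21: "\<And>s t. ((\<lambda>s. \<phi>2 s t) has_real_derivative \<phi>21 s t) (at s)"
    and c12: "\<And>e. e > 0 \<Longrightarrow> \<exists>\<delta>>0. \<forall>s t. \<bar>s - a\<bar> < \<delta> \<and> \<bar>t - b\<bar> < \<delta> \<longrightarrow> \<bar>\<phi>12 s t - \<phi>12 a b\<bar> < e"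
    and c21: "\<And>e. e > 0 \<Longrightarrow> \<exists>\<delta>>0. \<forall>s t. \<bar>s - a\<bar> < \<delta> \<and> \<bar>t - b\<bar> < \<delta> \<longrightarrow> \<bar>\<phi>21 s t - \<phi>21 a b\<bar> < e"
  shows "\<phi>12 a b = \<phi>21 a b"
proof (rule ccontr)
  assume "\<phi>12 a b \<noteq> \<phi>21 a b"
  define e where "e = \<bar>\<phi>12 a b - \<phi>21 a b\<bar> / 2"
  then have "e > 0" using \<open>\<phi>12 a b \<noteq> \<phi>21 a b\<close> by simp
  obtain \<delta>1 \<delta>2 where "\<delta>1 > 0" "\<delta>2 > 0"
    and \<delta>1: "\<forall>s t. \<bar>s - a\<bar> < \<delta>1 \<and> \<bar>t - b\<bar> < \<delta>1 \<longrightarrow> \<bar>\<phi>12 s t - \<phi>12 a b\<bar> < e"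
    and \<delta>2: "\<forall>s t. \<bar>s - a\<bar> < \<delta>2 \<and> \<bar>t - b\<bar> < \<delta>2 \<longrightarrow> \<bar>\<phi>21 s t - \<phi>21 a b\<bar> < e"
    using c12[OF \<open>e > 0\<close>] c21[OF \<open>e > 0\<close>] by blast
  define h where "h = min \<delta>1 \<delta>2 / 2"
  have h: "h > 0" "h < \<delta>1" "h < \<delta>2" using \<open>\<delta>1 > 0\<close> \<open>\<delta>2 > 0\<close> by (auto simp: h_def)
  obtain \<xi> \<eta> where "a < \<xi>" "\<xi> < a + h" "b < \<eta>" "\<eta> < b + h"
    and \<xi>\<eta>: "\<phi> (a + h) (b + h) - \<phi> (a + h) b - \<phi> a (b + h) + \<phi> a b = h * (h * \<phi>12 \<xi> \<eta>)"
    using second_difference_mean_value[of \<phi> \<phi>1 \<phi>12 h a b] d1 d12 h(1) by blast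
  obtain \<eta>' \<xi>' where "b < \<eta>'" "\<eta>' < b + h" "a < \<xi>'" "\<xi>' < a + h"
    and \<xi>\<eta>': "\<phi> (a + h) (b + h) - \<phi> a (b + h) - \<phi> (a + h) b + \<phi> a b = h * (h * \<phi>21 \<xi>' \<eta>')"
    using second_difference_mean_value[of "\<lambda>t s. \<phi> s t" "\<lambda>t s. \<phi>2 s t" "\<lambda>t s. \<phi>21 s t" h b a] d2 d21 h(1)
    by blast
  have "h * (h * \<phi>12 \<xi> \<eta>) = h * (h * \<phi>21 \<xi>' \<eta>')" using \<xi>\<eta> \<xi>\<eta>' by linarith
  then have "\<phi>12 \<xi> \<eta> = \<phi>21 \<xi>' \<eta>'" using h(1) by simp
  moreover have "\<bar>\<phi>12 \<xi> \<eta> - \<phi>12 a b\<bar> < e" "\<bar>\<phi>21 \<xi>' \<eta>' - \<phi>21 a b\<bar> < e"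
    using \<delta>1 \<delta>2 h \<open>a < \<xi>\<close> \<open>\<xi> < a + h\<close> \<open>b < \<eta>\<close> \<open>\<eta> < b + h\<close> \<open>a < \<xi>'\<close> \<open>\<xi>' < a + h\<close>
      \<open>b < \<eta>'\<close> \<open>\<eta>' < b + h\<close> by auto
  ultimately have "\<bar>\<phi>12 a b - \<phi>21 a b\<bar> < 2 * e" by linarith
  then show False by (simp add: e_def)
qed

lemma rpd_has_real_derivative:
  assumes "(\<lambda>t. g (x(j := t))) differentiable (at (x j))"
  shows "((\<lambda>t. g (x(j := t))) has_real_derivative rpd j g x) (at (x j))"
  using assms unfolding rpd_def by (simp add: DERIV_deriv_iff_real_differentiable)

lemma smooth_coords_differentiable:
  "smooth_coords S g \<Longrightarrow> set js \<subseteq> S \<Longrightarrow> j \<in> S \<Longrightarrow> (\<lambda>t. rpds js g (x(j := t))) differentiable (at (x j))"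
  unfolding smooth_coords_def by blast

lemma smooth_coords_has_real_derivative:
  "smooth_coords S g \<Longrightarrow> set js \<subseteq> S \<Longrightarrow> j \<in> S \<Longrightarrow>
    ((\<lambda>t. rpds js g (x(j := t))) has_real_derivative rpd j (rpds js g) x) (at (x j))"
  by (intro rpd_has_real_derivative smooth_coords_differentiable)

lemma smooth_coords_cont_coords: "smooth_coords S g \<Longrightarrow> set js \<subseteq> S \<Longrightarrow> cont_coords S (rpds js g)"
  unfolding smooth_coords_def by blast

lemma rpd_commute:
  assumes g: "smooth_coords S g" and "j \<in> S" "k \<in> S"
  shows "rpd j (rpd k g) x = rpd k (rpd j g) x"
proof (cases "j = k")
  case False
  define \<phi> where "\<phi> s t = g (x(j := s, k := t))" for s t
  define \<phi>1 where "\<phi>1 s t = rpd j g (x(j := s, k := t))" for s t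
  define \<phi>2 where "\<phi>2 s t = rpd k g (x(j := s, k := t))" for s t
  define \<phi>12 where "\<phi>12 s t = rpd k (rpd j g) (x(j := s, k := t))" for s t
  define \<phi>21 where "\<phi>21 s t = rpd j (rpd k g) (x(j := s, k := t))" for s t
  have upd: "(x(j := s, k := t))(j := s') = x(j := s', k := t)"
    "(x(j := s, k := t))(k := t') = x(j := s, k := t')"
    for s t s' t' using False by (auto simp: fun_eq_iff)
  have d: "((\<lambda>s. \<phi> s t) has_real_derivative \<phi>1 s t) (at s)"
    "((\<lambda>t. \<phi> s t) has_real_derivative \<phi>2 s t) (at t)"
    "((\<lambda>t. \<phi>1 s t) has_real_derivative \<phi>12 s t) (at t)"
    "((\<lambda>s. \<phi>2 s t) has_real_derivative \<phi>21 s t) (at s)"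
    for s t
    using smooth_coords_has_real_derivative[OF g, of "[]" j "x(j := s, k := t)"]
      smooth_coords_has_real_derivative[OF g, of "[]" k "x(j := s, k := t)"]
      smooth_coords_has_real_derivative[OF g, of "[j]" k "x(j := s, k := t)"]
      smooth_coords_has_real_derivative[OF g, of "[k]" j "x(j := s, k := t)"] assms(2,3) False
    by (simp_all add: upd \<phi>_def \<phi>1_def \<phi>2_def \<phi>12_def \<phi>21_def)
  have cont: "\<exists>\<delta>>0. \<forall>s t. \<bar>s - x j\<bar> < \<delta> \<and> \<bar>t - x k\<bar> < \<delta> \<longrightarrow>
      \<bar>rpds js g (x(j := s, k := t)) - rpds js g (x(j := x j, k := x k))\<bar> < e"
    if e: "e > 0" and js: "set js \<subseteq> S" for e js
  proof -
    obtain \<delta> where "\<delta> > 0" and \<delta>: "\<And>x'. (\<forall>i\<in>S. \<bar>x' i - x i\<bar> < \<delta>) \<and> (\<forall>i. i \<notin> S \<longrightarrow> x' i = x i) \<Longrightarrow>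
        \<bar>rpds js g x' - rpds js g x\<bar> < e"
      using smooth_coords_cont_coords[OF g js] e unfolding cont_coords_def by blast
    have "\<bar>rpds js g (x(j := s, k := t)) - rpds js g x\<bar> < e" if "\<bar>s - x j\<bar> < \<delta>" "\<bar>t - x k\<bar> < \<delta>" for s t
      using that \<open>\<delta> > 0\<close> assms(2,3) by (intro \<delta>) auto
    then show ?thesis using \<open>\<delta> > 0\<close> by auto
  qed
  have "\<phi>12 (x j) (x k) = \<phi>21 (x j) (x k)"
    using cont[of _ "[k, j]"] cont[of _ "[j, k]"] assms(2,3)
    by (intro mixed_partials_eq[OF d]) (simp_all add: \<phi>12_def \<phi>21_def)
  then show ?thesis by (simp add: \<phi>12_def \<phi>21_def)
qed simp

lemma cont_coords_add:
  assumes g: "cont_coords S g" and h: "cont_coords S h"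
  shows "cont_coords S (\<lambda>x. g x + h x)"
  unfolding cont_coords_def
proof (intro allI impI)
  fix x :: "nat \<Rightarrow> real" and e :: real assume "e > 0"
  then have "e / 2 > 0" by simp
  then obtain \<delta>1 \<delta>2 where "\<delta>1 > 0" "\<delta>2 > 0"
    and \<delta>1: "\<forall>x'. (\<forall>j\<in>S. \<bar>x' j - x j\<bar> < \<delta>1) \<and> (\<forall>j. j \<notin> S \<longrightarrow> x' j = x j) \<longrightarrow> \<bar>g x' - g x\<bar> < e / 2"
    and \<delta>2: "\<forall>x'. (\<forall>j\<in>S. \<bar>x' j - x j\<bar> < \<delta>2) \<and> (\<forall>j. j \<notin> S \<longrightarrow> x' j = x j) \<longrightarrow> \<bar>h x' - h x\<bar> < e / 2"
    using g h unfolding cont_coords_def by blast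
  have "\<bar>g x' + h x' - (g x + h x)\<bar> < e"
    if "(\<forall>j\<in>S. \<bar>x' j - x j\<bar> < min \<delta>1 \<delta>2) \<and> (\<forall>j. j \<notin> S \<longrightarrow> x' j = x j)" for x'
  proof -
    have "\<bar>g x' - g x\<bar> < e / 2" "\<bar>h x' - h x\<bar> < e / 2"
      using \<delta>1 \<delta>2 that by auto
    then show ?thesis by linarith
  qed
  then show "\<exists>\<delta>>0. \<forall>x'. (\<forall>j\<in>S. \<bar>x' j - x j\<bar> < \<delta>) \<and> (\<forall>j. j \<notin> S \<longrightarrow> x' j = x j) \<longrightarrow>
      \<bar>g x' + h x' - (g x + h x)\<bar> < e"
    using \<open>\<delta>1 > 0\<close> \<open>\<delta>2 > 0\<close> by (intro exI[of _ "min \<delta>1 \<delta>2"]) auto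
qed

lemma cont_coords_cmult:
  assumes "cont_coords S g"
  shows "cont_coords S (\<lambda>x. c * g x)"
  unfolding cont_coords_def
proof (intro allI impI)
  fix x :: "nat \<Rightarrow> real" and e :: real assume "e > 0"
  then have "e / (\<bar>c\<bar> + 1) > 0" by simp
  then obtain \<delta> where "\<delta> > 0"
    and \<delta>: "\<forall>x'. (\<forall>j\<in>S. \<bar>x' j - x j\<bar> < \<delta>) \<and> (\<forall>j. j \<notin> S \<longrightarrow> x' j = x j) \<longrightarrow>
      \<bar>g x' - g x\<bar> < e / (\<bar>c\<bar> + 1)"
    using assms unfolding cont_coords_def by blast
  have "\<bar>c * g x' - c * g x\<bar> < e"
    if "(\<forall>j\<in>S. \<bar>x' j - x j\<bar> < \<delta>) \<and> (\<forall>j. j \<notin> S \<longrightarrow> x' j = x j)" for x'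
  proof -
    have "\<bar>c * g x' - c * g x\<bar> = \<bar>c\<bar> * \<bar>g x' - g x\<bar>"
      by (simp add: abs_mult[symmetric] algebra_simps)
    also have "\<dots> \<le> (\<bar>c\<bar> + 1) * \<bar>g x' - g x\<bar>"
      by (simp add: mult_right_mono)
    also have "\<dots> < (\<bar>c\<bar> + 1) * (e / (\<bar>c\<bar> + 1))"
      using \<delta> that by (intro mult_strict_left_mono) auto
    finally show ?thesis by simp
  qed
  then show "\<exists>\<delta>>0. \<forall>x'. (\<forall>j\<in>S. \<bar>x' j - x j\<bar> < \<delta>) \<and> (\<forall>j. j \<notin> S \<longrightarrow> x' j = x j) \<longrightarrow>
      \<bar>c * g x' - c * g x\<bar> < e"
    using \<open>\<delta> > 0\<close> by auto
qed

lemma rpd_add: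
  assumes "(\<lambda>t. g (x(j := t))) differentiable (at (x j))" "(\<lambda>t. h (x(j := t))) differentiable (at (x j))"
  shows "rpd j (\<lambda>x. g x + h x) x = rpd j g x + rpd j h x"
  unfolding rpd_def using assms
  by (intro DERIV_imp_deriv DERIV_add) (simp_all add: DERIV_deriv_iff_real_differentiable)

lemma rpd_cmult:
  assumes "(\<lambda>t. g (x(j := t))) differentiable (at (x j))"
  shows "rpd j (\<lambda>x. c * g x) x = c * rpd j g x"
  unfolding rpd_def using assms
  by (intro DERIV_imp_deriv DERIV_cmult) (simp add: DERIV_deriv_iff_real_differentiable)

lemma rpds_add:
  assumes "smooth_coords S g" "smooth_coords S h" "set js \<subseteq> S"
  shows "rpds js (\<lambda>x. g x + h x) = (\<lambda>x. rpds js g x + rpds js h x)"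
  using assms(3)
  by (induction js) (auto intro!: ext rpd_add smooth_coords_differentiable[OF assms(1)]
      smooth_coords_differentiable[OF assms(2)])

lemma rpds_cmult:
  assumes "smooth_coords S g" "set js \<subseteq> S"
  shows "rpds js (\<lambda>x. c * g x) = (\<lambda>x. c * rpds js g x)"
  using assms(2) by (induction js) (auto intro!: ext rpd_cmult smooth_coords_differentiable[OF assms(1)])

lemma smooth_coords_zero: "smooth_coords S (\<lambda>x. 0)"
proof -
  have "rpds js (\<lambda>x. 0) = (\<lambda>x. 0)" for js
    by (induction js) (simp_all add: rpd_def)
  then show ?thesis unfolding smooth_coords_def cont_coords_def by simp
qed

lemma smooth_coords_add:
  assumes g: "smooth_coords S g" and h: "smooth_coords S h"
  shows "smooth_coords S (\<lambda>x. g x + h x)"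
  unfolding smooth_coords_def
proof (intro allI impI conjI ballI)
  fix js assume js: "set js \<subseteq> S"
  show "cont_coords S (rpds js (\<lambda>x. g x + h x))"
    unfolding rpds_add[OF g h js] by (intro cont_coords_add smooth_coords_cont_coords g h js)
next
  fix js j x assume js: "set js \<subseteq> S" and j: "j \<in> S"
  show "(\<lambda>t. rpds js (\<lambda>x. g x + h x) (x(j := t))) differentiable at (x j)"
    unfolding rpds_add[OF g h js] by (intro differentiable_add smooth_coords_differentiable[OF _ js j] g h)
qed

lemma smooth_coords_cmult:
  assumes g: "smooth_coords S g"
  shows "smooth_coords S (\<lambda>x. c * g x)"
  unfolding smooth_coords_def
proof (intro allI impI conjI ballI)
  fix js assume js: "set js \<subseteq> S"
  show "cont_coords S (rpds js (\<lambda>x. c * g x))"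
    unfolding rpds_cmult[OF g js] by (intro cont_coords_cmult smooth_coords_cont_coords g js)
next
  fix js j x assume js: "set js \<subseteq> S" and j: "j \<in> S"
  show "(\<lambda>t. rpds js (\<lambda>x. c * g x) (x(j := t))) differentiable at (x j)"
    unfolding rpds_cmult[OF g js]
    by (intro differentiable_mult differentiable_const smooth_coords_differentiable[OF g js j])
qed

lemma smooth_coords_rpd:
  assumes "smooth_coords S g" "j \<in> S"
  shows "smooth_coords S (rpd j g)"
proof -
  have "rpds js (rpd j g) = rpds (js @ [j]) g" for js
    by (induction js) auto
  then show ?thesis
    using assms unfolding smooth_coords_def by auto
qed

lemma depends_only_rpd:
  assumes "depends_only S g" "j \<in> S"
  shows "depends_only S (rpd j g)"
  unfolding depends_only_def
proof (intro allI impI)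
  fix x x' :: "nat \<Rightarrow> real" assume x: "\<forall>i\<in>S. x i = x' i"
  have "g (x(j := t)) = g (x'(j := t))" for t
    by (rule assms(1)[unfolded depends_only_def, rule_format]) (use x in auto)
  then have "(\<lambda>t. g (x(j := t))) = (\<lambda>t. g (x'(j := t)))" by simp
  then show "rpd j g x = rpd j g x'"
    using x assms(2) by (simp add: rpd_def)
qed

section \<open>Admissible coefficient functions and the Dirac operator in y\<close>

lemma depends_only_compose:
  "depends_only S f \<Longrightarrow> depends_only S g \<Longrightarrow> depends_only S (\<lambda>x. h (f x) (g x))"
  unfolding depends_only_def by metis

definition admissible :: "nat \<Rightarrow> ((nat \<Rightarrow> real) \<Rightarrow> clif) \<Rightarrow> bool" where
  "admissible m f \<longleftrightarrow> (\<forall>x. clif_in m (f x)) \<and> depends_only {2..m} f \<and> smooth_clif {2..m} f"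

lemma admissible_smooth_coords: "admissible m f \<Longrightarrow> smooth_coords {2..m} (\<lambda>x. f x C)"
  by (simp add: admissible_def smooth_clif_def)

lemma admissible_clif_in: "admissible m f \<Longrightarrow> clif_in m (f x)"
  by (simp add: admissible_def)

lemma admissible_update:
  assumes "admissible m f" "j \<notin> {2..m}"
  shows "f (x(j := t)) = f x"
proof -
  have "depends_only {2..m} f" using assms(1) by (simp add: admissible_def)
  then show ?thesis by (rule depends_only_def[THEN iffD1, rule_format]) (use assms(2) in auto)
qed

lemma pd_apply: "pd j f x C = rpd j (\<lambda>x. f x C) x"
  by (simp add: pd_def rpd_def)

lemma admissible_differentiable:
  assumes "admissible m f" "j \<in> {2..m}"
  shows "(\<lambda>t. f (x(j := t)) C) differentiable (at (x j))"
  using smooth_coords_differentiable[where js = "[]", OF admissible_smooth_coords[OF assms(1)]] assms(2)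
  by simp

lemma admissible_has_real_derivative:
  "admissible m f \<Longrightarrow> j \<in> {2..m} \<Longrightarrow>
    ((\<lambda>t. f (x(j := t)) C) has_real_derivative pd j f x C) (at (x j))"
  unfolding pd_apply by (intro rpd_has_real_derivative admissible_differentiable)

lemma admissible_pd:
  assumes "admissible m f" "j \<in> {2..m}"
  shows "admissible m (pd j f)"
proof -
  have "(\<lambda>x. pd j f x C) = rpd j (\<lambda>x. f x C)" for C
    by (simp add: pd_apply fun_eq_iff)
  moreover have "depends_only {2..m} (\<lambda>x. f x C)" for C
    using assms(1) depends_only_compose[of _ f f "\<lambda>u _. u C"] by (simp add: admissible_def)
  ultimately have "depends_only {2..m} (\<lambda>x. pd j f x C)" for C
    using assms(2) by (simp add: depends_only_rpd)
  then have "depends_only {2..m} (pd j f)"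
    by (auto simp: depends_only_def fun_eq_iff)
  then show ?thesis
    using assms \<open>\<And>C. (\<lambda>x. pd j f x C) = rpd j (\<lambda>x. f x C)\<close>
    by (auto simp: admissible_def smooth_clif_def clif_in_def pd_def smooth_coords_rpd)
qed

lemma admissible_zero: "admissible m 0"
  by (simp add: admissible_def clif_in_def depends_only_def smooth_clif_def smooth_coords_zero)

lemma admissible_add: "admissible m f \<Longrightarrow> admissible m g \<Longrightarrow> admissible m (f + g)"
  using depends_only_compose[of "{2..m}" f g "(+)"]
  by (simp add: admissible_def clif_in_def smooth_clif_def smooth_coords_add plus_fun_def)

lemma admissible_scaleR: "admissible m f \<Longrightarrow> admissible m (c *\<^sub>R f)"
  using depends_only_compose[of "{2..m}" f f "\<lambda>u _. c *\<^sub>R u"]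
  by (simp add: admissible_def clif_in_def smooth_clif_def smooth_coords_cmult scaleR_fun_def)

lemma subspace_admissible: "subspace {f. admissible m f}"
  by (simp add: subspace_def admissible_zero admissible_add admissible_scaleR)

lemma admissible_sum: "(\<And>i. i \<in> I \<Longrightarrow> admissible m (f i)) \<Longrightarrow> admissible m (\<Sum>i\<in>I. f i)"
  using subspace_sum[OF subspace_admissible] by auto

lemma admissible_uminus: "admissible m f \<Longrightarrow> admissible m (- f)"
  using subspace_neg[OF subspace_admissible] by auto

lemma admissible_diff: "admissible m f \<Longrightarrow> admissible m g \<Longrightarrow> admissible m (f - g)"
  using subspace_diff[OF subspace_admissible] by auto

lemma admissible_mul_egen:
  assumes "admissible m f" "k \<in> {1..m}"
  shows "admissible m (\<lambda>x. mul_egen k (f x))"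
  using assms clif_in_mul_egen depends_only_compose[of "{2..m}" f f "\<lambda>u _. mul_egen k u"]
  by (auto simp: admissible_def smooth_clif_def mul_egen_def intro!: smooth_coords_cmult)

lemma pd_add:
  "admissible m f \<Longrightarrow> admissible m g \<Longrightarrow> j \<in> {2..m} \<Longrightarrow> pd j (f + g) x = pd j f x + pd j g x"
  unfolding fun_eq_iff pd_apply by (simp add: rpd_add admissible_differentiable)

lemma pd_scaleR: "admissible m f \<Longrightarrow> j \<in> {2..m} \<Longrightarrow> pd j (c *\<^sub>R f) x = c *\<^sub>R pd j f x"
  unfolding fun_eq_iff pd_apply by (simp add: rpd_cmult admissible_differentiable)

lemma pd_sum:
  assumes "finite I" "\<And>i. i \<in> I \<Longrightarrow> admissible m (f i)" "j \<in> {2..m}"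
  shows "pd j (\<Sum>i\<in>I. f i) x = (\<Sum>i\<in>I. pd j (f i) x)"
  using assms
proof (induction I rule: finite_induct)
  case empty
  then show ?case by (simp add: pd_def fun_eq_iff)
next
  case (insert i I)
  have "pd j (\<Sum>i\<in>insert i I. f i) x = pd j (f i + (\<Sum>i\<in>I. f i)) x"
    using insert.hyps by simp
  also have "\<dots> = pd j (f i) x + pd j (\<Sum>i\<in>I. f i) x"
    using insert.prems by (intro pd_add admissible_sum) auto
  also have "\<dots> = (\<Sum>i\<in>insert i I. pd j (f i) x)"
    using insert by simp
  finally show ?case .
qed

lemma pd_mul_egen:
  "admissible m f \<Longrightarrow> j \<in> {2..m} \<Longrightarrow> pd j (\<lambda>x. mul_egen k (f x)) x = mul_egen k (pd j f x)"
  unfolding fun_eq_iff pd_apply mul_egen_def by (simp add: rpd_cmult admissible_differentiable)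

lemma pd_commute:
  assumes "admissible m f" "j \<in> {2..m}" "k \<in> {2..m}"
  shows "pd j (pd k f) x = pd k (pd j f) x"
proof
  fix C
  have "(\<lambda>x. pd k f x C) = rpd k (\<lambda>x. f x C)" "(\<lambda>x. pd j f x C) = rpd j (\<lambda>x. f x C)"
    by (simp_all add: pd_apply fun_eq_iff)
  then show "pd j (pd k f) x C = pd k (pd j f) x C"
    using assms by (simp add: pd_apply rpd_commute[OF admissible_smooth_coords])
qed

lemma dirY_eq_sum:
  assumes "admissible m f"
  shows "dirY m f = (\<Sum>j\<in>{2..m}. (\<lambda>x. mul_egen j (pd j f x)))"
proof (intro ext)
  fix x C
  have "cmul m (egen j) (pd j f x) = mul_egen j (pd j f x)" if "j \<in> {2..m}" for j
    using that assms by (intro cmul_egen admissible_clif_in admissible_pd) auto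
  then show "dirY m f x C = (\<Sum>j\<in>{2..m}. (\<lambda>x. mul_egen j (pd j f x))) x C"
    by (simp add: dirY_def sum_fun_apply)
qed

lemma dirY_apply: "admissible m f \<Longrightarrow> dirY m f x = (\<Sum>j\<in>{2..m}. mul_egen j (pd j f x))"
  by (simp add: dirY_eq_sum sum_fun_apply)

lemma admissible_dirY: "admissible m f \<Longrightarrow> admissible m (dirY m f)"
  unfolding dirY_eq_sum by (intro admissible_sum admissible_mul_egen admissible_pd) auto

lemma subspace_operator_dirY: "subspace_operator {f. admissible m f} (dirY m)"
proof unfold_locales
  fix f g c assume "f \<in> {f. admissible m f}" "g \<in> {f. admissible m f}"
  then show "dirY m (f + g) = dirY m f + dirY m g" "dirY m (c *\<^sub>R f) = c *\<^sub>R dirY m f"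
    by (auto intro!: ext simp: dirY_apply admissible_add admissible_scaleR pd_add pd_scaleR sum.distrib
        scaleR_sum_right linear_add[OF linear_mul_egen] linear_scale[OF linear_mul_egen])
qed (simp_all add: subspace_admissible admissible_dirY)

lemma pd_dirY:
  assumes "admissible m f" "j \<in> {2..m}"
  shows "pd j (dirY m f) x = (\<Sum>k\<in>{2..m}. mul_egen k (pd j (pd k f) x))"
proof -
  have "pd j (dirY m f) x = (\<Sum>k\<in>{2..m}. pd j (\<lambda>x. mul_egen k (pd k f x)) x)"
    unfolding dirY_eq_sum[OF assms(1)] using assms
    by (intro pd_sum admissible_mul_egen admissible_pd) auto
  also have "\<dots> = (\<Sum>k\<in>{2..m}. mul_egen k (pd j (pd k f) x))"
    using assms by (intro sum.cong refl pd_mul_egen admissible_pd) auto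
  finally show ?thesis .
qed

lemma sum_sum_antisymmetric:
  fixes X :: "'i \<Rightarrow> 'i \<Rightarrow> 'a::real_vector"
  assumes "finite I" and anti: "\<And>j k. j \<in> I \<Longrightarrow> k \<in> I \<Longrightarrow> j \<noteq> k \<Longrightarrow> X j k = - X k j"
  shows "(\<Sum>j\<in>I. \<Sum>k\<in>I. X j k) = (\<Sum>j\<in>I. X j j)"
proof -
  have X: "X j k = (if j = k then 2 *\<^sub>R X k k else 0) - X k j" if "j \<in> I" "k \<in> I" for j k
    using anti[OF that] by (cases "j = k") (simp_all add: scaleR_2)
  have "(\<Sum>j\<in>I. \<Sum>k\<in>I. X j k) = (\<Sum>k\<in>I. \<Sum>j\<in>I. (if j = k then 2 *\<^sub>R X k k else 0) - X k j)"
    by (subst sum.swap) (intro sum.cong refl X)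
  also have "\<dots> = 2 *\<^sub>R (\<Sum>k\<in>I. X k k) - (\<Sum>j\<in>I. \<Sum>k\<in>I. X j k)"
    using assms(1) by (simp add: sum_subtractf scaleR_sum_right)
  finally have "2 *\<^sub>R (\<Sum>j\<in>I. \<Sum>k\<in>I. X j k) = 2 *\<^sub>R (\<Sum>k\<in>I. X k k)"
    by (simp add: scaleR_2 eq_diff_eq)
  then show ?thesis by simp
qed

text \<open>The mixed terms cancel: partial derivatives commute, e_j and e_k anticommute.\<close>

lemma lapY_eq_neg_dirY_dirY:
  assumes "admissible m f"
  shows "lapY m f = - dirY m (dirY m f)"
proof
  fix x
  have "dirY m (dirY m f) x = (\<Sum>j\<in>{2..m}. \<Sum>k\<in>{2..m}. mul_egen j (mul_egen k (pd j (pd k f) x)))"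
    using assms
    by (simp add: dirY_eq_sum[OF admissible_dirY] pd_dirY sum_fun_apply linear_sum[OF linear_mul_egen])
  also have "\<dots> = (\<Sum>j\<in>{2..m}. mul_egen j (mul_egen j (pd j (pd j f) x)))"
  proof (rule sum_sum_antisymmetric)
    fix j k assume "j \<in> {2..m}" "k \<in> {2..m}" "j \<noteq> k"
    then have "pd j (pd k f) x = pd k (pd j f) x" using pd_commute[OF assms] by blast
    then show "mul_egen j (mul_egen k (pd j (pd k f) x)) = - mul_egen k (mul_egen j (pd k (pd j f) x))"
      by (simp only: mul_egen_anticommute[OF \<open>j \<noteq> k\<close>])
  qed simp
  also have "\<dots> = - lapY m f x"
    by (simp add: mul_egen_mul_egen lapY_def sum_negf fun_eq_iff sum_fun_apply)
  finally show "lapY m f x = (- dirY m (dirY m f)) x" by simp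
qed

lemma lapY_funpow:
  assumes "admissible m f"
  shows "(lapY m ^^ k) f = (-1) ^ k *\<^sub>R (dirY m ^^ (2 * k)) f"
proof (induction k)
  case (Suc k)
  interpret D: subspace_operator "{f. admissible m f}" "dirY m" by (rule subspace_operator_dirY)
  have Dk: "admissible m ((dirY m ^^ (2 * k)) f)"
    using D.D_funpow_closed assms by simp
  have "(lapY m ^^ Suc k) f = lapY m ((-1) ^ k *\<^sub>R (dirY m ^^ (2 * k)) f)"
    by (simp only: funpow.simps o_apply Suc.IH)
  also have "\<dots> = - dirY m (dirY m ((-1) ^ k *\<^sub>R (dirY m ^^ (2 * k)) f))"
    using Dk by (intro lapY_eq_neg_dirY_dirY admissible_scaleR)
  also have "\<dots> = (-1) ^ Suc k *\<^sub>R (dirY m ^^ (2 * Suc k)) f"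
    using Dk by (simp add: D.D_scaleR admissible_dirY)
  finally show ?case .
qed simp

section \<open>The Dirac operator in X on F\<close>

text \<open>cos z a + sin z b + cos zbar c + sin zbar d for z = u + e_1 v, in terms of real functions.\<close>

definition trig_expansion :: "real \<Rightarrow> real \<Rightarrow> clif \<Rightarrow> clif \<Rightarrow> clif \<Rightarrow> clif \<Rightarrow> clif" where
  "trig_expansion u v a b c d =
     (cos u * cosh v) *\<^sub>R (a + c) + (sin u * cosh v) *\<^sub>R (b + d) +
     (sin u * sinh v) *\<^sub>R mul_egen 1 (c - a) + (cos u * sinh v) *\<^sub>R mul_egen 1 (b - d)"

lemma Ffun_eq_trig_expansion:
  assumes "m \<ge> 1" "admissible m a" "admissible m b" "admissible m c" "admissible m d"
  shows "Ffun m a b c d x = trig_expansion (x 0) (x 1) (a x) (b x) (c x) (d x)"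
proof -
  have "cadd u w = u + w" for u w by (simp add: cadd_def fun_eq_iff)
  then show ?thesis
    using assms
    by (simp add: Ffun_def cmul_cplx admissible_clif_in trig_expansion_def Re_cos Im_cos Re_sin Im_sin
        cosh_def sinh_def mul_egen_def fun_eq_iff field_simps)
qed

lemma trig_expansion_add:
  "trig_expansion u v (a + a') (b + b') (c + c') (d + d') =
    trig_expansion u v a b c d + trig_expansion u v a' b' c' d'"
  by (simp add: trig_expansion_def linear_add[OF linear_mul_egen] linear_diff[OF linear_mul_egen]
      algebra_simps)

lemma trig_expansion_sum:
  "trig_expansion u v (\<Sum>j\<in>J. a j) (\<Sum>j\<in>J. b j) (\<Sum>j\<in>J. c j) (\<Sum>j\<in>J. d j) =
    (\<Sum>j\<in>J. trig_expansion u v (a j) (b j) (c j) (d j))"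
proof (induction J rule: infinite_finite_induct)
  case (insert j J)
  then show ?case
    by (subst (1 2 3 4 5) sum.insert) (simp_all only: trig_expansion_add not_False_eq_True)
qed (simp_all add: trig_expansion_def linear_0[OF linear_mul_egen])

lemma mul_egen_1_trig_expansion:
  "mul_egen 1 (trig_expansion u v a b c d) =
    trig_expansion u v (mul_egen 1 a) (mul_egen 1 b) (mul_egen 1 c) (mul_egen 1 d)"
  by (simp add: trig_expansion_def linear_add[OF linear_mul_egen] linear_diff[OF linear_mul_egen]
      linear_scale[OF linear_mul_egen])

text \<open>e_j anticommutes with e_1 and so exchanges z and zbar.\<close>

lemma mul_egen_trig_expansion:
  assumes "j \<noteq> 1"
  shows "mul_egen j (trig_expansion u v a b c d) =
    trig_expansion u v (mul_egen j c) (mul_egen j d) (mul_egen j a) (mul_egen j b)"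
proof -
  have "mul_egen j (mul_egen 1 w) = mul_egen 1 (- mul_egen j w)" for w
    using mul_egen_anticommute[OF assms, of w] by (simp add: linear_neg[OF linear_mul_egen])
  then show ?thesis
    by (simp add: trig_expansion_def linear_add[OF linear_mul_egen] linear_diff[OF linear_mul_egen]
        linear_scale[OF linear_mul_egen] linear_neg[OF linear_mul_egen] algebra_simps)
qed

lemma trig_expansion_has_derivative_fst:
  "((\<lambda>t. trig_expansion t v a b c d C) has_real_derivative
    trig_expansion u v b (- a) d (- c) C) (at u)"
  unfolding trig_expansion_def
  by (auto intro!: derivative_eq_intros simp: mul_egen_def algebra_simps)

lemma trig_expansion_has_derivative_snd:
  "((\<lambda>t. trig_expansion u t a b c d C) has_real_derivative
    trig_expansion u v (mul_egen 1 b) (- mul_egen 1 a) (- mul_egen 1 d) (mul_egen 1 c) C) (at v)"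
proof -
  have "trig_expansion u v (mul_egen 1 b) (- mul_egen 1 a) (- mul_egen 1 d) (mul_egen 1 c) =
      (cos u * sinh v) *\<^sub>R (a + c) + (sin u * sinh v) *\<^sub>R (b + d) +
      (sin u * cosh v) *\<^sub>R mul_egen 1 (c - a) + (cos u * cosh v) *\<^sub>R mul_egen 1 (b - d)"
    by (simp add: trig_expansion_def linear_add[OF linear_mul_egen] linear_diff[OF linear_mul_egen]
        linear_neg[OF linear_mul_egen] mul_egen_mul_egen algebra_simps)
  then show ?thesis
    unfolding trig_expansion_def by (auto intro!: derivative_eq_intros simp: algebra_simps)
qed

lemma trig_expansion_has_derivative_coeffs:
  assumes "\<And>C. ((\<lambda>t. a t C) has_real_derivative a' C) (at s)"
    and "\<And>C. ((\<lambda>t. b t C) has_real_derivative b' C) (at s)"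
    and "\<And>C. ((\<lambda>t. c t C) has_real_derivative c' C) (at s)"
    and "\<And>C. ((\<lambda>t. d t C) has_real_derivative d' C) (at s)"
  shows "((\<lambda>t. trig_expansion u v (a t) (b t) (c t) (d t) C) has_real_derivative
    trig_expansion u v a' b' c' d' C) (at s)"
  unfolding trig_expansion_def
  by (auto intro!: derivative_eq_intros assms simp: mul_egen_def algebra_simps)

lemma trig_expansion_eq_0_imp:
  assumes "\<And>u v. trig_expansion u v a b c d = 0"
  shows "a = 0 \<and> b = 0 \<and> c = 0 \<and> d = 0"
proof -
  have ac: "a + c = 0" using assms[of 0 0] by (simp add: trig_expansion_def)
  have bd: "b + d = 0" using assms[of "pi / 2" 0] by (simp add: trig_expansion_def)
  have "sinh (1 :: real) \<noteq> 0" by simp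
  then have "mul_egen 1 (c - a) = 0" "mul_egen 1 (b - d) = 0"
    using assms[of "pi / 2" 1] assms[of 0 1] ac bd by (simp_all add: trig_expansion_def)
  then have "mul_egen 1 (mul_egen 1 (c - a)) = 0" "mul_egen 1 (mul_egen 1 (b - d)) = 0"
    by (simp_all add: linear_0[OF linear_mul_egen])
  then have "c = a" "b = d" by (simp_all add: mul_egen_mul_egen)
  with ac bd have "2 *\<^sub>R a = 0" "2 *\<^sub>R d = 0" by (simp_all add: scaleR_2)
  then show ?thesis using \<open>c = a\<close> \<open>b = d\<close> by simp
qed

lemma clif_in_Ffun: "clif_in m (Ffun m a b c d x)"
  using clif_in_cmul by (simp add: Ffun_def Let_def cadd_def clif_in_def)

lemma pd0_Ffun:
  assumes "m \<ge> 1" "admissible m a" "admissible m b" "admissible m c" "admissible m d"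
  shows "pd 0 (Ffun m a b c d) x = Ffun m b (- a) d (- c) x"
proof
  fix C
  have "(\<lambda>t. Ffun m a b c d (x(0 := t)) C) =
      (\<lambda>t. trig_expansion t (x 1) (a x) (b x) (c x) (d x) C)"
    using assms by (simp add: Ffun_eq_trig_expansion admissible_update)
  then show "pd 0 (Ffun m a b c d) x C = Ffun m b (- a) d (- c) x C"
    using assms
    by (simp add: pd_def DERIV_imp_deriv[OF trig_expansion_has_derivative_fst] Ffun_eq_trig_expansion
        admissible_uminus)
qed

lemma pd1_Ffun:
  assumes "m \<ge> 1" "admissible m a" "admissible m b" "admissible m c" "admissible m d"
  shows "pd 1 (Ffun m a b c d) x = trig_expansion (x 0) (x 1)
    (mul_egen 1 (b x)) (- mul_egen 1 (a x)) (- mul_egen 1 (d x)) (mul_egen 1 (c x))"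
proof
  fix C
  have "(\<lambda>t. Ffun m a b c d (x(1 := t)) C) =
      (\<lambda>t. trig_expansion (x 0) t (a x) (b x) (c x) (d x) C)"
    using assms by (simp add: Ffun_eq_trig_expansion admissible_update)
  then show "pd 1 (Ffun m a b c d) x C = trig_expansion (x 0) (x 1)
      (mul_egen 1 (b x)) (- mul_egen 1 (a x)) (- mul_egen 1 (d x)) (mul_egen 1 (c x)) C"
    by (simp add: pd_def DERIV_imp_deriv[OF trig_expansion_has_derivative_snd])
qed

lemma pd_Ffun:
  assumes "m \<ge> 1" "admissible m a" "admissible m b" "admissible m c" "admissible m d" "j \<in> {2..m}"
  shows "pd j (Ffun m a b c d) x = trig_expansion (x 0) (x 1) (pd j a x) (pd j b x) (pd j c x) (pd j d x)"
proof
  fix C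
  let ?T = "trig_expansion (x 0) (x 1)"
  have "Ffun m a b c d (x(j := t)) =
      ?T (a (x(j := t))) (b (x(j := t))) (c (x(j := t))) (d (x(j := t)))" for t
    using assms by (simp add: Ffun_eq_trig_expansion)
  moreover have "((\<lambda>t. ?T (a (x(j := t))) (b (x(j := t))) (c (x(j := t))) (d (x(j := t))) C)
      has_real_derivative ?T (pd j a x) (pd j b x) (pd j c x) (pd j d x) C) (at (x j))"
    using assms by (intro trig_expansion_has_derivative_coeffs admissible_has_real_derivative)
  ultimately show "pd j (Ffun m a b c d) x C = ?T (pd j a x) (pd j b x) (pd j c x) (pd j d x) C"
    by (simp add: pd_def DERIV_imp_deriv)
qed

lemma dirX_Ffun:
  assumes m: "m \<ge> 2" and adm: "admissible m a" "admissible m b" "admissible m c" "admissible m d"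
  shows "dirX m (Ffun m a b c d) = Ffun m (dirY m c) (dirY m d) (dirY m a + 2 *\<^sub>R d) (dirY m b - 2 *\<^sub>R c)"
proof
  fix x :: "nat \<Rightarrow> real"
  let ?F = "Ffun m a b c d" and ?T = "trig_expansion (x 0) (x 1)"
    and ?G = "Ffun m (dirY m c) (dirY m d) (dirY m a + 2 *\<^sub>R d) (dirY m b - 2 *\<^sub>R c)"
  have m1: "m \<ge> 1" using m by simp
  have "clif_in m (pd j ?F x)" for j
    using clif_in_Ffun by (simp add: clif_in_def pd_def)
  then have "dirX m ?F x = pd 0 ?F x + (\<Sum>j\<in>{1..m}. mul_egen j (pd j ?F x))"
    by (simp add: dirX_def cmul_egen sum_fun_apply fun_eq_iff)
  also have "\<dots> = pd 0 ?F x + mul_egen 1 (pd 1 ?F x) + (\<Sum>j\<in>{2..m}. mul_egen j (pd j ?F x))"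
  proof -
    have "{1..m} = insert 1 {2..m}" using m by auto
    then show ?thesis by (simp add: add.assoc)
  qed
  also have "pd 0 ?F x = ?T (b x) (- a x) (d x) (- c x)"
    using adm by (simp add: pd0_Ffun[OF m1] Ffun_eq_trig_expansion[OF m1] admissible_uminus)
  also have "mul_egen 1 (pd 1 ?F x) = ?T (- b x) (a x) (d x) (- c x)"
    unfolding pd1_Ffun[OF m1 adm] mul_egen_1_trig_expansion
    by (simp add: mul_egen_mul_egen linear_neg[OF linear_mul_egen])
  also have "(\<Sum>j\<in>{2..m}. mul_egen j (pd j ?F x)) =
      (\<Sum>j\<in>{2..m}. ?T (mul_egen j (pd j c x)) (mul_egen j (pd j d x))
        (mul_egen j (pd j a x)) (mul_egen j (pd j b x)))"
    using adm by (intro sum.cong refl) (simp add: pd_Ffun[OF m1] mul_egen_trig_expansion)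
  also have "\<dots> = ?T (dirY m c x) (dirY m d x) (dirY m a x) (dirY m b x)"
    using adm by (simp only: trig_expansion_sum dirY_apply)
  also have "?T (b x) (- a x) (d x) (- c x) + ?T (- b x) (a x) (d x) (- c x) + \<dots> =
      ?T (dirY m c x) (dirY m d x) (dirY m a x + 2 *\<^sub>R d x) (dirY m b x - 2 *\<^sub>R c x)"
    by (simp only: trig_expansion_add[symmetric]) (simp add: scaleR_2 algebra_simps)
  also have "\<dots> = ?G x"
    using adm
    by (subst Ffun_eq_trig_expansion[OF m1 admissible_dirY admissible_dirY])
      (simp_all add: admissible_dirY admissible_add admissible_scaleR admissible_diff)
  finally show "dirX m ?F x = ?G x" .
qed

lemma Ffun_eq_0_imp:
  assumes "m \<ge> 1" "admissible m a" "admissible m b" "admissible m c" "admissible m d"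
    and zero: "\<And>x. Ffun m a b c d x = czero"
  shows "a = 0 \<and> b = 0 \<and> c = 0 \<and> d = 0"
proof -
  have "a x = 0 \<and> b x = 0 \<and> c x = 0 \<and> d x = 0" for x
  proof (rule trig_expansion_eq_0_imp)
    fix u v
    let ?y = "x(0 := u, 1 := v)"
    have "f ?y = f x" if "admissible m f" for f
      using admissible_update[OF that, of 1 "x(0 := u)" v] admissible_update[OF that, of 0 x u] by simp
    then have "trig_expansion u v (a x) (b x) (c x) (d x) = Ffun m a b c d ?y"
      using Ffun_eq_trig_expansion[OF assms(1-5), of ?y] assms(2-5) by simp
    also have "\<dots> = 0"
      using zero by (simp add: czero_eq_0)
    finally show "trig_expansion u v (a x) (b x) (c x) (d x) = 0" .
  qed
  then show ?thesis by (simp add: fun_eq_iff)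
qed

lemma Ffun_zero: "m \<ge> 1 \<Longrightarrow> Ffun m 0 0 0 0 x = 0"
  by (simp add: Ffun_eq_trig_expansion admissible_zero trig_expansion_def linear_0[OF linear_mul_egen])

lemma dirX_funpow_Ffun_eq_0_iff:
  assumes "m \<ge> 2" "admissible m a" "admissible m b" "admissible m c" "admissible m d"
  shows "(\<forall>x. (dirX m ^^ k) (Ffun m a b c d) x = czero) \<longleftrightarrow>
    (subspace_operator.dirac_coeffs (dirY m) ^^ k) (a, b, c, d) = 0"
proof -
  interpret D: subspace_operator "{f. admissible m f}" "dirY m" by (rule subspace_operator_dirY)
  let ?W = "{f. admissible m f}"
  define F where "F = (\<lambda>(a, b, c, d). Ffun m a b c d)"
  define v where "v k = (D.dirac_coeffs ^^ k) (a, b, c, d)" for k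
  have v_adm: "v k \<in> ?W \<times> ?W \<times> ?W \<times> ?W" for k
    unfolding v_def using assms by (intro D.dirac_coeffs_funpow_closed) simp
  have "(dirX m ^^ k) (Ffun m a b c d) = F (v k)" for k
  proof (induction k)
    case (Suc k)
    obtain a' b' c' d' where vk: "v k = (a', b', c', d')" by (cases "v k")
    then have "admissible m a'" "admissible m b'" "admissible m c'" "admissible m d'"
      using v_adm[of k] by auto
    then show ?case
      using Suc.IH vk by (simp add: F_def v_def dirX_Ffun[OF assms(1)])
  qed (simp add: F_def v_def)
  then show ?thesis
    using v_adm[of k] Ffun_eq_0_imp[of m] assms(1)
    by (cases "v k") (auto simp: F_def v_def zero_prod_def Ffun_zero czero_eq_0)
qed

lemma lapY_funpow_eq_0_iff:
  "admissible m f \<Longrightarrow> (\<forall>x. (lapY m ^^ n) f x = czero) \<longleftrightarrow> (dirY m ^^ (2 * n)) f = 0"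
  by (simp add: lapY_funpow czero_eq_0 fun_eq_iff)

lemma root_op_apply_eq_ccoef:
  assumes "subspace_operator W D"
  shows "subspace_operator.root_op D n f x C =
    (\<Sum>k\<in>{1..n}. (-1) ^ k * ccoef k * (D ^^ (2 * k - 1)) f x C)"
proof -
  have "(-1) ^ k * ccoef k = sqrt_coeff k" for k
    by (simp add: ccoef_eq_sqrt_coeff flip: mult.assoc power_mult_distrib)
  then show ?thesis
    by (simp add: subspace_operator.root_op_def[OF assms] sum_fun_apply)
qed

theorem theorem5:
  fixes m n :: nat and A1 B1 A2 B2 :: "(nat \<Rightarrow> real) \<Rightarrow> clif"
  assumes "m \<ge> 2" and "n \<ge> 1"
    and "\<forall>f\<in>{A1, B1, A2, B2}. (\<forall>x. clif_in m (f x)) \<and> depends_only {2..m} f \<and> smooth_clif {2..m} f"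
  shows "(\<forall>x. (dirX m ^^ n) (Ffun m A1 B1 A2 B2) x = czero) \<longleftrightarrow>
    ((\<forall>x. (lapY m ^^ n) A1 x = czero) \<and>
     (\<forall>x. (lapY m ^^ n) B1 x = czero) \<and>
     (\<forall>x. A2 x = (\<lambda>C. \<Sum>k\<in>{1..n}. (-1) ^ k * ccoef k * (dirY m ^^ (2 * k - 1)) B1 x C)) \<and>
     (\<forall>x. B2 x = (\<lambda>C. \<Sum>k\<in>{1..n}. (-1) ^ (k + 1) * ccoef k * (dirY m ^^ (2 * k - 1)) A1 x C)))"
proof -
  interpret D: subspace_operator "{f. admissible m f}" "dirY m" by (rule subspace_operator_dirY)
  have adm: "admissible m A1" "admissible m B1" "admissible m A2" "admissible m B2"
    using assms(3) by (simp_all add: admissible_def)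
  have "(\<forall>x. (dirX m ^^ n) (Ffun m A1 B1 A2 B2) x = czero) \<longleftrightarrow>
      (dirY m ^^ (2 * n)) A1 = 0 \<and> (dirY m ^^ (2 * n)) B1 = 0 \<and>
      A2 = D.root_op n B1 \<and> B2 = - D.root_op n A1"
    using assms(1,2) adm by (simp add: dirX_funpow_Ffun_eq_0_iff D.dirac_coeffs_funpow_eq_0_iff)
  moreover have "A2 = D.root_op n B1 \<longleftrightarrow>
      (\<forall>x. A2 x = (\<lambda>C. \<Sum>k\<in>{1..n}. (-1) ^ k * ccoef k * (dirY m ^^ (2 * k - 1)) B1 x C))"
    by (simp add: root_op_apply_eq_ccoef[OF subspace_operator_dirY] fun_eq_iff)
  moreover have "B2 = - D.root_op n A1 \<longleftrightarrow>
      (\<forall>x. B2 x = (\<lambda>C. \<Sum>k\<in>{1..n}. (-1) ^ (k + 1) * ccoef k * (dirY m ^^ (2 * k - 1)) A1 x C))"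
    by (simp add: root_op_apply_eq_ccoef[OF subspace_operator_dirY] fun_eq_iff sum_negf)
  ultimately show ?thesis
    using lapY_funpow_eq_0_iff[OF adm(1)] lapY_funpow_eq_0_iff[OF adm(2)] by blast
qed

end
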